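(* Let $\mathfrak C$ be a monster model of a complete theory $T$. Let $p(\bar x)\in S(\emptyset)$ with $\bar x$ short, $q\in S_p(\mathfrak C)$, $M\prec\mathfrak C$ a small model, and $\bar\alpha$ a tuple in $\mathfrak C$ realizing $q|_M$. Let $B:=A_{q|_{\bar\alpha},\bar\alpha}=\{\sigma\in\mathrm{Aut}(\mathfrak C):\sigma(\bar\alpha)\models q|_{\bar\alpha}\}$. Then $B\,B\,B^{-1}B^{-1}\bar\alpha:=\{\sigma(\bar\alpha):\sigma\in BBB^{-1}B^{-1}\}\subseteq\{\bar\beta\subseteq\mathfrak C:d_L(\bar\alpha,\bar\beta)\le 4\}\subseteq[\bar\alpha]_{E_L}$.
   Context: $\mathfrak C$ is $\kappa$-saturated and strongly $\kappa$-homogeneous ($\kappa$ large); small/short means of size $<\kappa$. $S_p(\mathfrak C)=\{q\in S_{\bar x}(\mathfrak C):p\subseteq q\}$; $q|_M$ and $q|_{\bar\alpha}$ denote the restrictions of $q$ to types over $M$ and over (the set enumerated by) $\bar\alpha$. The Lascar distance $d_L(\bar\alpha,\bar\beta)$ is the least $n$ such that there are $\bar\alpha_0=\bar\alpha,\dots,\bar\alpha_n=\bar\beta$ and small models $M_0,\dots,M_{n-1}$ with $\bar\alpha_i\equiv_{M_i}\bar\alpha_{i+1}$; $E_L$ is the Lascar strong type relation, i.e. the orbit equivalence relation of the group generated by automorphisms fixing pointwise some small submodel, and $[\bar\alpha]_{E_L}$ is the class of $\bar\alpha$. *)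

theory Defs
  imports Main "HOL-Library.Extended_Nat"
begin

text \<open>Terms and formulas over function symbols 'f, relation symbols 'r, variables 'v,
  and parameters (constants naming elements) of type 'a.\<close>

datatype ('f, 'v, 'a) trm = Var 'v | Par 'a | Fn 'f "('f, 'v, 'a) trm list"

datatype ('f, 'r, 'v, 'a) fm =
    Eq "('f, 'v, 'a) trm" "('f, 'v, 'a) trm"
  | Rel 'r "('f, 'v, 'a) trm list"
  | Neg "('f, 'r, 'v, 'a) fm"
  | Conj "('f, 'r, 'v, 'a) fm" "('f, 'r, 'v, 'a) fm"
  | Ex 'v "('f, 'r, 'v, 'a) fm"

record ('a, 'f, 'r) struc =
  univ :: "'a set"
  fint :: "'f \<Rightarrow> 'a list \<Rightarrow> 'a"
  rint :: "'r \<Rightarrow> 'a list \<Rightarrow> bool"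
  farity :: "'f \<Rightarrow> nat"
  rarity :: "'r \<Rightarrow> nat"

fun wft :: "('a, 'f, 'r) struc \<Rightarrow> ('f, 'v, 'a) trm \<Rightarrow> bool" where
  "wft S (Var v) = True"
| "wft S (Par a) = True"
| "wft S (Fn f ts) = (length ts = farity S f \<and> (\<forall>t\<in>set ts. wft S t))"

fun wff :: "('a, 'f, 'r) struc \<Rightarrow> ('f, 'r, 'v, 'a) fm \<Rightarrow> bool" where
  "wff S (Eq s t) = (wft S s \<and> wft S t)"
| "wff S (Rel r ts) = (length ts = rarity S r \<and> (\<forall>t\<in>set ts. wft S t))"
| "wff S (Neg \<phi>) = wff S \<phi>"
| "wff S (Conj \<phi> \<psi>) = (wff S \<phi> \<and> wff S \<psi>)"
| "wff S (Ex v \<phi>) = wff S \<phi>"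

fun fvt :: "('f, 'v, 'a) trm \<Rightarrow> 'v set" where
  "fvt (Var v) = {v}"
| "fvt (Par a) = {}"
| "fvt (Fn f ts) = (\<Union>t\<in>set ts. fvt t)"

fun fv :: "('f, 'r, 'v, 'a) fm \<Rightarrow> 'v set" where
  "fv (Eq s t) = fvt s \<union> fvt t"
| "fv (Rel r ts) = (\<Union>t\<in>set ts. fvt t)"
| "fv (Neg \<phi>) = fv \<phi>"
| "fv (Conj \<phi> \<psi>) = fv \<phi> \<union> fv \<psi>"
| "fv (Ex v \<phi>) = fv \<phi> - {v}"

fun parst :: "('f, 'v, 'a) trm \<Rightarrow> 'a set" where
  "parst (Var v) = {}"
| "parst (Par a) = {a}"
| "parst (Fn f ts) = (\<Union>t\<in>set ts. parst t)"

fun params :: "('f, 'r, 'v, 'a) fm \<Rightarrow> 'a set" where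
  "params (Eq s t) = parst s \<union> parst t"
| "params (Rel r ts) = (\<Union>t\<in>set ts. parst t)"
| "params (Neg \<phi>) = params \<phi>"
| "params (Conj \<phi> \<psi>) = params \<phi> \<union> params \<psi>"
| "params (Ex v \<phi>) = params \<phi>"

fun evt :: "('a, 'f, 'r) struc \<Rightarrow> ('v \<Rightarrow> 'a) \<Rightarrow> ('f, 'v, 'a) trm \<Rightarrow> 'a" where
  "evt S e (Var v) = e v"
| "evt S e (Par a) = a"
| "evt S e (Fn f ts) = fint S f (map (evt S e) ts)"

fun sat :: "('a, 'f, 'r) struc \<Rightarrow> ('v \<Rightarrow> 'a) \<Rightarrow> ('f, 'r, 'v, 'a) fm \<Rightarrow> bool" where
  "sat S e (Eq s t) = (evt S e s = evt S e t)"
| "sat S e (Rel r ts) = rint S r (map (evt S e) ts)"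
| "sat S e (Neg \<phi>) = (\<not> sat S e \<phi>)"
| "sat S e (Conj \<phi> \<psi>) = (sat S e \<phi> \<and> sat S e \<psi>)"
| "sat S e (Ex v \<phi>) = (\<exists>b\<in>univ S. sat S (e(v := b)) \<phi>)"

definition struct_ok :: "('a, 'f, 'r) struc \<Rightarrow> bool" where
  "struct_ok S \<longleftrightarrow> univ S \<noteq> {} \<and>
     (\<forall>f xs. set xs \<subseteq> univ S \<longrightarrow> length xs = farity S f \<longrightarrow> fint S f xs \<in> univ S)"

definition elem_sub :: "('a, 'f, 'r) struc \<Rightarrow> 'a set \<Rightarrow> bool" where
  "elem_sub C M \<longleftrightarrow> M \<subseteq> univ C \<and> M \<noteq> {} \<and>
     (\<forall>f xs. set xs \<subseteq> M \<longrightarrow> length xs = farity C f \<longrightarrow> fint C f xs \<in> M) \<and>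
     (\<forall>(\<phi> :: ('f, 'r, nat, 'a) fm) e. wff C \<phi> \<longrightarrow> params \<phi> \<subseteq> M \<longrightarrow> range e \<subseteq> M \<longrightarrow>
        (sat (C\<lparr>univ := M\<rparr>) e \<phi> \<longleftrightarrow> sat C e \<phi>))"

definition aut :: "('a, 'f, 'r) struc \<Rightarrow> ('a \<Rightarrow> 'a) \<Rightarrow> bool" where
  "aut C \<sigma> \<longleftrightarrow> bij_betw \<sigma> (univ C) (univ C) \<and>
     (\<forall>f xs. set xs \<subseteq> univ C \<longrightarrow> length xs = farity C f \<longrightarrow>
        \<sigma> (fint C f xs) = fint C f (map \<sigma> xs)) \<and>
     (\<forall>r xs. set xs \<subseteq> univ C \<longrightarrow> length xs = rarity C r \<longrightarrow>
        (rint C r (map \<sigma> xs) \<longleftrightarrow> rint C r xs))"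

text \<open>A tuple indexed by 'i; the formulas of a type in x-bar use variables of type
  'i + nat, where Inl i is the variable x_i and Inr n are auxiliary variables.\<close>

definition tup_asg :: "('a, 'f, 'r) struc \<Rightarrow> ('i \<Rightarrow> 'a) \<Rightarrow> ('i + nat \<Rightarrow> 'a)" where
  "tup_asg C b = case_sum b (\<lambda>_. SOME x. x \<in> univ C)"

definition lform :: "('a, 'f, 'r) struc \<Rightarrow> 'a set \<Rightarrow> ('f, 'r, 'i + nat, 'a) fm \<Rightarrow> bool" where
  "lform C A \<phi> \<longleftrightarrow> wff C \<phi> \<and> fv \<phi> \<subseteq> range Inl \<and> params \<phi> \<subseteq> A"

text \<open>Complete type over A in the variables x-bar (consistency with Th(C_A) = finite
  satisfiability in C).\<close>
definition ctype :: "('a, 'f, 'r) struc \<Rightarrow> 'a set \<Rightarrow> ('f, 'r, 'i + nat, 'a) fm set \<Rightarrow> bool" where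
  "ctype C A q \<longleftrightarrow> (\<forall>\<phi>\<in>q. lform C A \<phi>) \<and>
     (\<forall>F. finite F \<longrightarrow> F \<subseteq> q \<longrightarrow> (\<exists>e. range e \<subseteq> univ C \<and> (\<forall>\<phi>\<in>F. sat C e \<phi>))) \<and>
     (\<forall>\<phi>. lform C A \<phi> \<longrightarrow> \<phi> \<in> q \<or> Neg \<phi> \<in> q)"

definition realizes :: "('a, 'f, 'r) struc \<Rightarrow> ('f, 'r, 'i + nat, 'a) fm set \<Rightarrow> ('i \<Rightarrow> 'a) \<Rightarrow> bool" where
  "realizes C q b \<longleftrightarrow> range b \<subseteq> univ C \<and> (\<forall>\<phi>\<in>q. sat C (tup_asg C b) \<phi>)"

definition restr :: "('f, 'r, 'v, 'a) fm set \<Rightarrow> 'a set \<Rightarrow> ('f, 'r, 'v, 'a) fm set" where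
  "restr q A = {\<phi> \<in> q. params \<phi> \<subseteq> A}"

definition tp_eq :: "('a, 'f, 'r) struc \<Rightarrow> 'a set \<Rightarrow> ('i \<Rightarrow> 'a) \<Rightarrow> ('i \<Rightarrow> 'a) \<Rightarrow> bool" where
  "tp_eq C A a b \<longleftrightarrow> (\<forall>\<phi> :: ('f, 'r, 'i + nat, 'a) fm. lform C A \<phi> \<longrightarrow>
      (sat C (tup_asg C a) \<phi> \<longleftrightarrow> sat C (tup_asg C b) \<phi>))"

definition small :: "'k rel \<Rightarrow> 'b set \<Rightarrow> bool" where
  "small \<kappa> X \<longleftrightarrow> (card_of X, \<kappa>) \<in> ordLess"

definition saturated :: "'k rel \<Rightarrow> ('a, 'f, 'r) struc \<Rightarrow> bool" where
  "saturated \<kappa> C \<longleftrightarrow> (\<forall>A (q :: ('f, 'r, unit + nat, 'a) fm set).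
      A \<subseteq> univ C \<longrightarrow> small \<kappa> A \<longrightarrow> ctype C A q \<longrightarrow> (\<exists>b. realizes C q b))"

definition partial_elem :: "('a, 'f, 'r) struc \<Rightarrow> 'a set \<Rightarrow> ('a \<Rightarrow> 'a) \<Rightarrow> bool" where
  "partial_elem C A f \<longleftrightarrow> (\<forall>(\<phi> :: ('f, 'r, nat, 'a) fm) e. wff C \<phi> \<longrightarrow> params \<phi> = {} \<longrightarrow>
      range e \<subseteq> A \<longrightarrow> (sat C e \<phi> \<longleftrightarrow> sat C (f \<circ> e) \<phi>))"

definition strongly_homogeneous :: "'k rel \<Rightarrow> ('a, 'f, 'r) struc \<Rightarrow> bool" where
  "strongly_homogeneous \<kappa> C \<longleftrightarrow> (\<forall>A f. A \<subseteq> univ C \<longrightarrow> small \<kappa> A \<longrightarrow> f ` A \<subseteq> univ C \<longrightarrow>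
      partial_elem C A f \<longrightarrow> (\<exists>\<sigma>. aut C \<sigma> \<and> (\<forall>x\<in>A. \<sigma> x = f x)))"

text \<open>kappa is an (infinite) cardinal larger than the language.\<close>
definition monster :: "('a, 'f, 'r) struc \<Rightarrow> 'k rel \<Rightarrow> bool" where
  "monster C \<kappa> \<longleftrightarrow> struct_ok C \<and> Card_order \<kappa> \<and>
     small \<kappa> (UNIV :: nat set) \<and> small \<kappa> (UNIV :: 'f set) \<and> small \<kappa> (UNIV :: 'r set) \<and>
     saturated \<kappa> C \<and> strongly_homogeneous \<kappa> C"

definition lascar_chain :: "('a, 'f, 'r) struc \<Rightarrow> 'k rel \<Rightarrow> ('i \<Rightarrow> 'a) \<Rightarrow> ('i \<Rightarrow> 'a) \<Rightarrow> nat \<Rightarrow> bool" where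
  "lascar_chain C \<kappa> a b n \<longleftrightarrow> (\<exists>(as :: nat \<Rightarrow> 'i \<Rightarrow> 'a) Ms.
      as 0 = a \<and> as n = b \<and> (\<forall>i\<le>n. range (as i) \<subseteq> univ C) \<and>
      (\<forall>i<n. elem_sub C (Ms i) \<and> small \<kappa> (Ms i) \<and> tp_eq C (Ms i) (as i) (as (Suc i))))"

definition dL :: "('a, 'f, 'r) struc \<Rightarrow> 'k rel \<Rightarrow> ('i \<Rightarrow> 'a) \<Rightarrow> ('i \<Rightarrow> 'a) \<Rightarrow> enat" where
  "dL C \<kappa> a b = (if \<exists>n. lascar_chain C \<kappa> a b n
                   then enat (LEAST n. lascar_chain C \<kappa> a b n) else \<infinity>)"

inductive_set autfL :: "('a, 'f, 'r) struc \<Rightarrow> 'k rel \<Rightarrow> ('a \<Rightarrow> 'a) set"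
  for C :: "('a, 'f, 'r) struc" and \<kappa> :: "'k rel" where
  fix_model: "aut C \<sigma> \<Longrightarrow> elem_sub C M \<Longrightarrow> small \<kappa> M \<Longrightarrow> (\<forall>x\<in>M. \<sigma> x = x) \<Longrightarrow> \<sigma> \<in> autfL C \<kappa>"
| ident: "id \<in> autfL C \<kappa>"
| comp: "\<sigma> \<in> autfL C \<kappa> \<Longrightarrow> \<tau> \<in> autfL C \<kappa> \<Longrightarrow> \<sigma> \<circ> \<tau> \<in> autfL C \<kappa>"
| inv: "\<sigma> \<in> autfL C \<kappa> \<Longrightarrow> inv_into (univ C) \<sigma> \<in> autfL C \<kappa>"

definition EL :: "('a, 'f, 'r) struc \<Rightarrow> 'k rel \<Rightarrow> ('i \<Rightarrow> 'a) \<Rightarrow> ('i \<Rightarrow> 'a) \<Rightarrow> bool" where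
  "EL C \<kappa> a b \<longleftrightarrow> (\<exists>\<sigma>\<in>autfL C \<kappa>. b = \<sigma> \<circ> a)"

definition A_set :: "('a, 'f, 'r) struc \<Rightarrow> ('f, 'r, 'i + nat, 'a) fm set \<Rightarrow> ('i \<Rightarrow> 'a) \<Rightarrow> ('a \<Rightarrow> 'a) set" where
  "A_set C r a = {\<sigma>. aut C \<sigma> \<and> realizes C r (\<sigma> \<circ> a)}"

end

theory Submission
  imports Defs
begin

text \<open>Every \<open>\<sigma> \<in> B\<close> moves \<open>\<alpha>\<close> to a tuple of the same type over some small model: a
  realisation \<open>\<gamma>\<close> of \<open>q|\<^sub>M\<^sub>\<alpha>\<close> has the type of \<open>\<alpha>\<close> over \<open>M\<close> and the type of \<open>\<sigma>(\<alpha>)\<close>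
  over \<open>\<alpha>\<close>, so by strong homogeneity some automorphism fixing \<open>\<alpha>\<close> sends \<open>\<sigma>(\<alpha>)\<close> to \<open>\<gamma>\<close>,
  and its inverse carries \<open>M\<close> to a model \<open>N\<close> with \<open>\<alpha> \<equiv>\<^sub>N \<sigma>(\<alpha>)\<close>. Applying \<open>\<sigma>\<^sup>-\<^sup>1\<close>
  gives the same for \<open>\<sigma>\<^sup>-\<^sup>1\<close>. Translating these four steps by \<open>\<sigma>\<^sub>1\<close>, \<open>\<sigma>\<^sub>1\<sigma>\<^sub>2\<close>, \<dots>
  yields a Lascar chain \<open>\<alpha>, \<sigma>\<^sub>1(\<alpha>), \<sigma>\<^sub>1\<sigma>\<^sub>2(\<alpha>), \<dots>\<close> of length 4. Conversely each step
  \<open>a \<equiv>\<^sub>N b\<close> of a Lascar chain is realised by an automorphism fixing \<open>N\<close>, so Lascar distance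
  at most 4 implies \<open>E\<^sub>L\<close>.

  The monster model is only assumed saturated for \<open>1\<close>-types, so realising \<open>q|\<^sub>M\<^sub>\<alpha>\<close>
  needs saturation for small tuples, obtained by realising one variable at a time.\<close>

section \<open>Substitution and renaming of parameters\<close>

lemma evt_cong: "\<forall>v\<in>fvt t. e v = e' v \<Longrightarrow> evt S e t = evt S e' t"
  by (induction t) (auto intro!: arg_cong[where f="fint S _"])

lemma sat_cong: "\<forall>v\<in>fv \<phi>. e v = e' v \<Longrightarrow> sat S e \<phi> = sat S e' \<phi>"
proof (induction \<phi> arbitrary: e e')
  case (Eq s t)
  then show ?case using evt_cong[of s e e' S] evt_cong[of t e e' S] by simp
next
  case (Rel r ts)
  then have "map (evt S e) ts = map (evt S e') ts" by (auto intro: evt_cong)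
  then show ?case by (simp only: sat.simps)
next
  case (Conj \<phi> \<psi>)
  have "sat S e \<phi> = sat S e' \<phi>" by (rule Conj.IH(1)) (use Conj.prems in auto)
  moreover have "sat S e \<psi> = sat S e' \<psi>" by (rule Conj.IH(2)) (use Conj.prems in auto)
  ultimately show ?case by simp
next
  case (Ex v \<phi>)
  have "sat S (e(v := b)) \<phi> = sat S (e'(v := b)) \<phi>" for b
    by (rule Ex.IH) (use Ex.prems in auto)
  then show ?case by simp
qed simp

lemma evt_univ_update:
  fixes S :: "('a, 'f, 'r) struc"
  shows "evt (S\<lparr>univ := U\<rparr>) = (evt S :: ('v \<Rightarrow> 'a) \<Rightarrow> ('f, 'v, 'a) trm \<Rightarrow> 'a)"
proof (intro ext)
  fix e :: "'v \<Rightarrow> 'a" and t :: "('f, 'v, 'a) trm"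
  show "evt (S\<lparr>univ := U\<rparr>) e t = evt S e t"
    by (induction t) (auto intro!: arg_cong[where f="fint S _"])
qed

lemma finite_fvt: "finite (fvt t)"
  by (induction t) auto

lemma finite_fv: "finite (fv \<phi>)"
  by (induction \<phi>) (auto simp: finite_fvt)

text \<open>Capture-avoiding substitution: the variable bound by the \<open>d\<close>-th nested quantifier is
  renamed to \<open>Inr d\<close>, so it cannot capture a substituted term avoiding \<open>Inr d\<close>,
  \<open>Inr (d + 1)\<close>, \<dots>\<close>

fun subst_trm :: "('v \<Rightarrow> ('f, 'w, 'a) trm) \<Rightarrow> ('f, 'v, 'a) trm \<Rightarrow> ('f, 'w, 'a) trm" where
  "subst_trm \<sigma> (Var v) = \<sigma> v"
| "subst_trm \<sigma> (Par a) = Par a"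
| "subst_trm \<sigma> (Fn f ts) = Fn f (map (subst_trm \<sigma>) ts)"

fun subst_fm ::
  "nat \<Rightarrow> ('v \<Rightarrow> ('f, 'w + nat, 'a) trm) \<Rightarrow> ('f, 'r, 'v, 'a) fm \<Rightarrow> ('f, 'r, 'w + nat, 'a) fm" where
  "subst_fm d \<sigma> (Eq s t) = Eq (subst_trm \<sigma> s) (subst_trm \<sigma> t)"
| "subst_fm d \<sigma> (Rel r ts) = Rel r (map (subst_trm \<sigma>) ts)"
| "subst_fm d \<sigma> (Neg \<phi>) = Neg (subst_fm d \<sigma> \<phi>)"
| "subst_fm d \<sigma> (Conj \<phi> \<psi>) = Conj (subst_fm d \<sigma> \<phi>) (subst_fm d \<sigma> \<psi>)"
| "subst_fm d \<sigma> (Ex v \<phi>) = Ex (Inr d) (subst_fm (Suc d) (\<sigma>(v := Var (Inr d))) \<phi>)"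

lemma evt_subst_trm:
  "\<forall>v\<in>fvt t. evt S e' (\<sigma> v) = e v \<Longrightarrow> evt S e' (subst_trm \<sigma> t) = evt S e t"
  by (induction t) (auto intro!: arg_cong[where f="fint S _"])

lemma evt_upd: "x \<notin> fvt t \<Longrightarrow> evt S (e(x := b)) t = evt S e t"
  by (rule evt_cong) auto

lemma sat_subst_fm_from:
  assumes "\<forall>v\<in>fv \<phi>. evt S e' (\<sigma> v) = e v \<and> (\<forall>d'\<ge>d. Inr d' \<notin> fvt (\<sigma> v))"
  shows "sat S e' (subst_fm d \<sigma> \<phi>) = sat S e \<phi>"
  using assms
proof (induction \<phi> arbitrary: d \<sigma> e e')
  case (Eq s t)
  then show ?case using evt_subst_trm[of s S e' \<sigma> e] evt_subst_trm[of t S e' \<sigma> e] by simp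
next
  case (Rel r ts)
  then have "map (evt S e' \<circ> subst_trm \<sigma>) ts = map (evt S e) ts" by (auto intro: evt_subst_trm)
  then show ?case by (simp only: sat.simps subst_fm.simps map_map)
next
  case (Conj \<phi> \<psi>)
  have "sat S e' (subst_fm d \<sigma> \<phi>) = sat S e \<phi>" by (rule Conj.IH(1)) (use Conj.prems in auto)
  moreover have "sat S e' (subst_fm d \<sigma> \<psi>) = sat S e \<psi>" by (rule Conj.IH(2)) (use Conj.prems in auto)
  ultimately show ?case by simp
next
  case (Ex v \<phi>)
  have "sat S (e'(Inr d := b)) (subst_fm (Suc d) (\<sigma>(v := Var (Inr d))) \<phi>) = sat S (e(v := b)) \<phi>"
    for b
  proof (rule Ex.IH, intro ballI)
    fix w assume "w \<in> fv \<phi>"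
    then have "w \<noteq> v \<Longrightarrow> evt S e' (\<sigma> w) = e w \<and> (\<forall>d'\<ge>d. Inr d' \<notin> fvt (\<sigma> w))"
      using Ex.prems by simp
    then show "evt S (e'(Inr d := b)) ((\<sigma>(v := Var (Inr d))) w) = (e(v := b)) w \<and>
        (\<forall>d'\<ge>Suc d. Inr d' \<notin> fvt ((\<sigma>(v := Var (Inr d))) w))"
      by (cases "w = v") (auto simp: evt_upd)
  qed
  then show ?case by simp
qed simp

lemma fvt_subst_trm: "fvt (subst_trm \<sigma> t) = (\<Union>v\<in>fvt t. fvt (\<sigma> v))"
  by (induction t) auto

lemma parst_subst_trm: "parst (subst_trm \<sigma> t) = parst t \<union> (\<Union>v\<in>fvt t. parst (\<sigma> v))"
  by (induction t) auto

lemma wft_subst_trm: "(\<And>v. wft S (\<sigma> v)) \<Longrightarrow> wft S t \<Longrightarrow> wft S (subst_trm \<sigma> t)"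
  by (induction t) auto

lemma fv_subst_fm: "fv (subst_fm d \<sigma> \<phi>) \<subseteq> (\<Union>v\<in>fv \<phi>. fvt (\<sigma> v))"
proof (induction \<phi> arbitrary: d \<sigma>)
  case (Ex v \<phi>)
  show ?case
  proof
    fix x assume "x \<in> fv (subst_fm d \<sigma> (Ex v \<phi>))"
    then have x: "x \<in> fv (subst_fm (Suc d) (\<sigma>(v := Var (Inr d))) \<phi>)" "x \<noteq> Inr d" by auto
    then obtain w where "w \<in> fv \<phi>" "x \<in> fvt ((\<sigma>(v := Var (Inr d))) w)" using Ex.IH by blast
    then show "x \<in> (\<Union>v\<in>fv (Ex v \<phi>). fvt (\<sigma> v))" using x(2) by (cases "w = v") auto
  qed
next
  case (Conj \<phi> \<psi>)
  then show ?case using Conj.IH(1)[of d \<sigma>] Conj.IH(2)[of d \<sigma>] by fastforce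
qed (auto simp: fvt_subst_trm)

lemma params_subst_fm: "params (subst_fm d \<sigma> \<phi>) \<subseteq> params \<phi> \<union> (\<Union>v\<in>fv \<phi>. parst (\<sigma> v))"
proof (induction \<phi> arbitrary: d \<sigma>)
  case (Ex v \<phi>)
  show ?case
  proof
    fix x assume "x \<in> params (subst_fm d \<sigma> (Ex v \<phi>))"
    then have "x \<in> params \<phi> \<or> (\<exists>w\<in>fv \<phi>. x \<in> parst ((\<sigma>(v := Var (Inr d))) w))"
      using Ex.IH by fastforce
    then show "x \<in> params (Ex v \<phi>) \<union> (\<Union>v\<in>fv (Ex v \<phi>). parst (\<sigma> v))"
      by (auto split: if_splits)
  qed
next
  case (Conj \<phi> \<psi>)
  then show ?case using Conj.IH(1)[of d \<sigma>] Conj.IH(2)[of d \<sigma>] by fastforce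
qed (auto simp: parst_subst_trm)

lemma wff_subst_fm: "(\<And>v. wft S (\<sigma> v)) \<Longrightarrow> wff S \<phi> \<Longrightarrow> wff S (subst_fm d \<sigma> \<phi>)"
  by (induction \<phi> arbitrary: d \<sigma>) (auto intro: wft_subst_trm)

text \<open>Terms over the tuple variables \<open>Inl i\<close> never capture the renamed bound variables.\<close>

lemma sat_subst_fm:
  assumes "\<And>v. v \<in> fv \<phi> \<Longrightarrow> evt S e' (\<sigma> v) = e v \<and> fvt (\<sigma> v) \<subseteq> range Inl"
  shows "sat S e' (subst_fm 0 \<sigma> \<phi>) = sat S e \<phi>"
  by (rule sat_subst_fm_from) (use assms in blast)

lemma lform_subst_fm:
  assumes "wff C \<phi>" "params \<phi> \<subseteq> A" "\<And>v. wft C (\<sigma> v)"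
    and "\<And>v. v \<in> fv \<phi> \<Longrightarrow> fvt (\<sigma> v) \<subseteq> range Inl \<and> parst (\<sigma> v) \<subseteq> A"
  shows "lform C A (subst_fm 0 \<sigma> \<phi>)"
  using assms wff_subst_fm[of C \<sigma> \<phi> 0] fv_subst_fm[of 0 \<sigma> \<phi>] params_subst_fm[of 0 \<sigma> \<phi>]
  unfolding lform_def by blast

fun map_par_trm :: "('a \<Rightarrow> 'a) \<Rightarrow> ('f, 'v, 'a) trm \<Rightarrow> ('f, 'v, 'a) trm" where
  "map_par_trm \<tau> (Var v) = Var v"
| "map_par_trm \<tau> (Par a) = Par (\<tau> a)"
| "map_par_trm \<tau> (Fn f ts) = Fn f (map (map_par_trm \<tau>) ts)"

fun map_par :: "('a \<Rightarrow> 'a) \<Rightarrow> ('f, 'r, 'v, 'a) fm \<Rightarrow> ('f, 'r, 'v, 'a) fm" where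
  "map_par \<tau> (Eq s t) = Eq (map_par_trm \<tau> s) (map_par_trm \<tau> t)"
| "map_par \<tau> (Rel r ts) = Rel r (map (map_par_trm \<tau>) ts)"
| "map_par \<tau> (Neg \<phi>) = Neg (map_par \<tau> \<phi>)"
| "map_par \<tau> (Conj \<phi> \<psi>) = Conj (map_par \<tau> \<phi>) (map_par \<tau> \<psi>)"
| "map_par \<tau> (Ex v \<phi>) = Ex v (map_par \<tau> \<phi>)"

lemma fvt_map_par_trm: "fvt (map_par_trm \<tau> t) = fvt t"
  by (induction t) auto

lemma fv_map_par: "fv (map_par \<tau> \<phi>) = fv \<phi>"
  by (induction \<phi>) (auto simp: fvt_map_par_trm)

lemma parst_map_par_trm: "parst (map_par_trm \<tau> t) = \<tau> ` parst t"
  by (induction t) auto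

lemma params_map_par: "params (map_par \<tau> \<phi>) = \<tau> ` params \<phi>"
  by (induction \<phi>) (auto simp: parst_map_par_trm image_Un)

lemma wft_map_par_trm: "wft S (map_par_trm \<tau> t) = wft S t"
  by (induction t) auto

lemma wff_map_par: "wff S (map_par \<tau> \<phi>) = wff S \<phi>"
  by (induction \<phi>) (auto simp: wft_map_par_trm)

lemma map_par_trm_inverse:
  "\<forall>x\<in>parst t. \<tau> (\<tau>' x) = x \<Longrightarrow> map_par_trm \<tau> (map_par_trm \<tau>' t) = t"
  by (induction t) (auto intro: map_idI)

lemma map_par_inverse:
  "\<forall>x\<in>params \<phi>. \<tau> (\<tau>' x) = x \<Longrightarrow> map_par \<tau> (map_par \<tau>' \<phi>) = \<phi>"
  by (induction \<phi>) (auto simp: map_par_trm_inverse intro: map_idI)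

section \<open>Automorphisms\<close>

definition closed_fint :: "('a, 'f, 'r) struc \<Rightarrow> 'a set \<Rightarrow> bool" where
  "closed_fint C U \<longleftrightarrow> (\<forall>f xs. set xs \<subseteq> U \<longrightarrow> length xs = farity C f \<longrightarrow> fint C f xs \<in> U)"

lemma struct_ok_closed_fint: "struct_ok C \<Longrightarrow> closed_fint C (univ C)"
  unfolding struct_ok_def closed_fint_def by auto

lemma elem_sub_closed_fint: "elem_sub C N \<Longrightarrow> closed_fint C N"
  unfolding elem_sub_def closed_fint_def by auto

lemma evt_in_closed:
  "closed_fint C U \<Longrightarrow> range e \<subseteq> U \<Longrightarrow> parst t \<subseteq> U \<Longrightarrow> wft C t \<Longrightarrow> evt C e t \<in> U"
proof (induction t)
  case (Fn f ts)
  then have "set (map (evt C e) ts) \<subseteq> U" by auto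
  then show ?case using Fn.prems unfolding closed_fint_def by simp
qed auto

lemma aut_fint:
  "aut C \<tau> \<Longrightarrow> set xs \<subseteq> univ C \<Longrightarrow> length xs = farity C f \<Longrightarrow>
    \<tau> (fint C f xs) = fint C f (map \<tau> xs)"
  unfolding aut_def by blast

lemma aut_rint:
  "aut C \<tau> \<Longrightarrow> set xs \<subseteq> univ C \<Longrightarrow> length xs = rarity C r \<Longrightarrow>
    rint C r (map \<tau> xs) = rint C r xs"
  unfolding aut_def by blast

lemma aut_in: "aut C \<tau> \<Longrightarrow> x \<in> univ C \<Longrightarrow> \<tau> x \<in> univ C"
  unfolding aut_def bij_betw_def by auto

lemma aut_image: "aut C \<tau> \<Longrightarrow> \<tau> ` univ C = univ C"
  unfolding aut_def bij_betw_def by auto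

lemma aut_inj_on: "aut C \<tau> \<Longrightarrow> inj_on \<tau> (univ C)"
  unfolding aut_def bij_betw_def by auto

lemma aut_inv_into_f: "aut C \<tau> \<Longrightarrow> x \<in> univ C \<Longrightarrow> inv_into (univ C) \<tau> (\<tau> x) = x"
  unfolding aut_def by (meson bij_betw_inv_into_left)

lemma aut_f_inv_into: "aut C \<tau> \<Longrightarrow> x \<in> univ C \<Longrightarrow> \<tau> (inv_into (univ C) \<tau> x) = x"
  unfolding aut_def by (meson bij_betw_inv_into_right)

lemma aut_inv_into_image:
  "aut C \<tau> \<Longrightarrow> N \<subseteq> univ C \<Longrightarrow> y \<in> \<tau> ` N \<Longrightarrow> inv_into (univ C) \<tau> y \<in> N"
  using aut_inv_into_f by fastforce

lemma inv_into_comp_aut: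
  assumes "aut C f" "range a \<subseteq> univ C"
  shows "inv_into (univ C) f \<circ> (f \<circ> a) = a"
proof
  fix i
  show "(inv_into (univ C) f \<circ> (f \<circ> a)) i = a i"
    using aut_inv_into_f[OF assms(1) range_subsetD[OF assms(2), of i]] by simp
qed

lemma aut_id: "aut C id"
  unfolding aut_def by (simp add: bij_betw_id)

lemma aut_comp:
  assumes "aut C \<sigma>" "aut C \<tau>"
  shows "aut C (\<sigma> \<circ> \<tau>)"
  unfolding aut_def
proof (intro conjI allI impI)
  show "bij_betw (\<sigma> \<circ> \<tau>) (univ C) (univ C)"
    using assms unfolding aut_def by (auto intro: bij_betw_trans)
next
  fix f xs assume xs: "set xs \<subseteq> univ C" "length xs = farity C f"
  then have "set (map \<tau> xs) \<subseteq> univ C" using aut_in[OF assms(2)] by auto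
  then show "(\<sigma> \<circ> \<tau>) (fint C f xs) = fint C f (map (\<sigma> \<circ> \<tau>) xs)"
    using aut_fint[OF assms(1)] aut_fint[OF assms(2)] xs by simp
next
  fix r xs assume xs: "set xs \<subseteq> univ C" "length xs = rarity C r"
  then have "set (map \<tau> xs) \<subseteq> univ C" using aut_in[OF assms(2)] by auto
  then show "rint C r (map (\<sigma> \<circ> \<tau>) xs) = rint C r xs"
    using aut_rint[OF assms(1), of "map \<tau> xs"] aut_rint[OF assms(2)] xs by simp
qed

lemma aut_inv_into:
  assumes ok: "struct_ok C" and \<tau>: "aut C \<tau>"
  shows "aut C (inv_into (univ C) \<tau>)"
  unfolding aut_def
proof (intro conjI allI impI)
  let ?t = "inv_into (univ C) \<tau>"
  show bij: "bij_betw ?t (univ C) (univ C)"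
    using \<tau> unfolding aut_def by (blast intro: bij_betw_inv_into)
  have inv: "map \<tau> (map ?t xs) = xs" and tin: "set (map ?t xs) \<subseteq> univ C"
    if "set xs \<subseteq> univ C" for xs
    using that aut_f_inv_into[OF \<tau>] bij_betwE[OF bij] by (auto intro!: map_idI)
  fix f xs assume xs: "set xs \<subseteq> univ C" "length xs = farity C f"
  have "fint C f (map ?t xs) \<in> univ C"
    using ok tin[OF xs(1)] xs(2) unfolding struct_ok_def by auto
  moreover have "\<tau> (fint C f (map ?t xs)) = fint C f xs"
    using aut_fint[OF \<tau> tin[OF xs(1)]] xs(2) inv[OF xs(1)] by simp
  ultimately show "?t (fint C f xs) = fint C f (map ?t xs)"
    using aut_inv_into_f[OF \<tau>] by metis
next
  let ?t = "inv_into (univ C) \<tau>"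
  fix r xs assume xs: "set xs \<subseteq> univ C" "length xs = rarity C r"
  have "set (map ?t xs) \<subseteq> univ C" "map \<tau> (map ?t xs) = xs"
    using xs(1) aut_f_inv_into[OF \<tau>] aut_inv_into_image[OF \<tau> order_refl] aut_image[OF \<tau>]
    by (auto intro!: map_idI)
  then show "rint C r (map ?t xs) = rint C r xs"
    using aut_rint[OF \<tau>, of "map ?t xs" r] xs(2) by simp
qed

lemma evt_map_par:
  assumes "aut C \<tau>" "U \<subseteq> univ C" "closed_fint C U" "range e \<subseteq> U"
  shows "parst t \<subseteq> U \<Longrightarrow> wft C t \<Longrightarrow> evt C (\<tau> \<circ> e) (map_par_trm \<tau> t) = \<tau> (evt C e t)"
proof (induction t)
  case (Fn f ts)
  have "evt C (\<tau> \<circ> e) (map_par_trm \<tau> x) = \<tau> (evt C e x)" if "x \<in> set ts" for x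
    by (rule Fn.IH[OF that]) (use Fn.prems that in auto)
  then have "map (evt C (\<tau> \<circ> e) \<circ> map_par_trm \<tau>) ts = map \<tau> (map (evt C e) ts)" by simp
  moreover have "set (map (evt C e) ts) \<subseteq> univ C"
    using Fn.prems evt_in_closed[OF assms(3,4)] assms(2) by (auto simp: UN_subset_iff)
  moreover have "length (map (evt C e) ts) = farity C f" using Fn.prems by simp
  ultimately show ?case unfolding map_par_trm.simps evt.simps by (metis aut_fint[OF assms(1)] map_map)
qed auto

text \<open>Relativised to a closed subset \<open>U\<close>, so that it also transports elementary substructures.\<close>

lemma sat_map_par:
  assumes "aut C \<tau>" "U \<subseteq> univ C" "closed_fint C U"
  shows "range e \<subseteq> U \<Longrightarrow> params \<phi> \<subseteq> U \<Longrightarrow> wff C \<phi> \<Longrightarrow>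
    sat (C\<lparr>univ := \<tau> ` U\<rparr>) (\<tau> \<circ> e) (map_par \<tau> \<phi>) = sat (C\<lparr>univ := U\<rparr>) e \<phi>"
proof (induction \<phi> arbitrary: e)
  case (Eq s t)
  have "evt C e s \<in> univ C" "evt C e t \<in> univ C"
    using Eq evt_in_closed[OF assms(3)] assms(2) by auto
  then have "(\<tau> (evt C e s) = \<tau> (evt C e t)) = (evt C e s = evt C e t)"
    using aut_inj_on[OF assms(1)] by (auto dest: inj_onD)
  moreover have "evt C (\<tau> \<circ> e) (map_par_trm \<tau> s) = \<tau> (evt C e s)"
    "evt C (\<tau> \<circ> e) (map_par_trm \<tau> t) = \<tau> (evt C e t)"
    using Eq evt_map_par[OF assms Eq.prems(1)] by auto
  ultimately show ?case by (simp only: map_par.simps sat.simps evt_univ_update)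
next
  case (Rel r ts)
  have "map (evt C (\<tau> \<circ> e) \<circ> map_par_trm \<tau>) ts = map \<tau> (map (evt C e) ts)"
    using Rel evt_map_par[OF assms Rel.prems(1)] by (auto simp: UN_subset_iff)
  moreover have "set (map (evt C e) ts) \<subseteq> univ C"
    using Rel.prems evt_in_closed[OF assms(3) Rel.prems(1)] assms(2) by (auto simp: UN_subset_iff)
  moreover have "length (map (evt C e) ts) = rarity C r" using Rel.prems by simp
  ultimately have "rint C r (map (evt C (\<tau> \<circ> e) \<circ> map_par_trm \<tau>) ts) = rint C r (map (evt C e) ts)"
    by (metis aut_rint[OF assms(1)])
  then show ?case unfolding map_par.simps sat.simps evt_univ_update map_map by simp
next
  case (Ex v \<phi>)
  have IH: "sat (C\<lparr>univ := \<tau> ` U\<rparr>) (\<tau> \<circ> (e(v := b))) (map_par \<tau> \<phi>) = sat (C\<lparr>univ := U\<rparr>) (e(v := b)) \<phi>"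
    if "b \<in> U" for b
    by (rule Ex.IH) (use Ex.prems that in auto)
  have upd: "(\<tau> \<circ> e)(v := \<tau> b) = \<tau> \<circ> (e(v := b))" for b by auto
  have univ_update: "univ (S\<lparr>univ := V\<rparr>) = V" for S :: "('a, 'f, 'r) struc" and V by simp
  have "sat (C\<lparr>univ := \<tau> ` U\<rparr>) (\<tau> \<circ> e) (map_par \<tau> (Ex v \<phi>)) =
      (\<exists>b\<in>\<tau> ` U. sat (C\<lparr>univ := \<tau> ` U\<rparr>) ((\<tau> \<circ> e)(v := b)) (map_par \<tau> \<phi>))"
    unfolding map_par.simps sat.simps univ_update ..
  also have "\<dots> = (\<exists>b\<in>U. sat (C\<lparr>univ := \<tau> ` U\<rparr>) (\<tau> \<circ> (e(v := b))) (map_par \<tau> \<phi>))"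
    unfolding upd[symmetric] by blast
  also have "\<dots> = sat (C\<lparr>univ := U\<rparr>) e (Ex v \<phi>)"
    unfolding sat.simps univ_update using IH by (rule bex_cong[OF refl])
  finally show ?case .
qed simp_all

lemma sat_aut:
  assumes "struct_ok C" "aut C \<tau>" "range e \<subseteq> univ C" "params \<phi> \<subseteq> univ C" "wff C \<phi>"
  shows "sat C (\<tau> \<circ> e) (map_par \<tau> \<phi>) = sat C e \<phi>"
  using sat_map_par[OF assms(2) order_refl struct_ok_closed_fint[OF assms(1)] assms(3-5)]
  by (simp add: aut_image[OF assms(2)])

lemma tup_asg_Inl [simp]: "tup_asg C b (Inl i) = b i"
  by (simp add: tup_asg_def)

lemma range_tup_asg:
  assumes "struct_ok C" "range b \<subseteq> univ C"
  shows "range (tup_asg C b) \<subseteq> univ C"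
proof -
  have "(SOME x. x \<in> univ C) \<in> univ C"
    using assms(1) unfolding struct_ok_def by (meson ex_in_conv someI_ex)
  then show ?thesis using range_subsetD[OF assms(2)] unfolding tup_asg_def by (auto split: sum.splits)
qed

lemma sat_tup_asg_aut:
  assumes ok: "struct_ok C" and \<tau>: "aut C \<tau>" and c: "range c \<subseteq> univ C"
    and \<phi>: "wff C \<phi>" "fv \<phi> \<subseteq> range Inl" "params \<phi> \<subseteq> univ C"
  shows "sat C (tup_asg C (\<tau> \<circ> c)) (map_par \<tau> \<phi>) = sat C (tup_asg C c) \<phi>"
proof -
  have "sat C (tup_asg C (\<tau> \<circ> c)) (map_par \<tau> \<phi>) = sat C (\<tau> \<circ> tup_asg C c) (map_par \<tau> \<phi>)"
    by (rule sat_cong) (use \<phi>(2) in \<open>auto simp: fv_map_par\<close>)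
  also have "\<dots> = sat C (tup_asg C c) \<phi>"
    using sat_aut[OF ok \<tau> range_tup_asg[OF ok c] \<phi>(3,1)] .
  finally show ?thesis .
qed

lemma tp_eq_sym: "tp_eq C A a b \<Longrightarrow> tp_eq C A b a"
  unfolding tp_eq_def by blast

lemma tp_eq_aut_image:
  fixes C :: "('a, 'f, 'r) struc" and a b :: "'i \<Rightarrow> 'a"
  assumes ok: "struct_ok C" and \<tau>: "aut C \<tau>" and N: "N \<subseteq> univ C"
    and a: "range a \<subseteq> univ C" and b: "range b \<subseteq> univ C" and tp: "tp_eq C N a b"
  shows "tp_eq C (\<tau> ` N) (\<tau> \<circ> a) (\<tau> \<circ> b)"
  unfolding tp_eq_def
proof (intro allI impI)
  fix \<phi> :: "('f, 'r, 'i + nat, 'a) fm"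
  assume \<phi>: "lform C (\<tau> ` N) \<phi>"
  have \<tau>N: "\<tau> ` N \<subseteq> univ C" using N aut_in[OF \<tau>] by auto
  define \<phi>0 where "\<phi>0 = map_par (inv_into (univ C) \<tau>) \<phi>"
  have \<phi>0: "lform C N \<phi>0"
    using \<phi> aut_inv_into_image[OF \<tau> N] unfolding \<phi>0_def lform_def
    by (auto simp: fv_map_par params_map_par wff_map_par)
  have "map_par \<tau> \<phi>0 = \<phi>"
    unfolding \<phi>0_def using \<phi> \<tau>N aut_f_inv_into[OF \<tau>] unfolding lform_def
    by (intro map_par_inverse) blast
  moreover have "sat C (tup_asg C (\<tau> \<circ> c)) (map_par \<tau> \<phi>0) = sat C (tup_asg C c) \<phi>0"
    if "range c \<subseteq> univ C" for c
    by (rule sat_tup_asg_aut[OF ok \<tau> that]) (use \<phi>0 N in \<open>auto simp: lform_def\<close>)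
  moreover have "sat C (tup_asg C a) \<phi>0 = sat C (tup_asg C b) \<phi>0"
    using tp \<phi>0 unfolding tp_eq_def by blast
  ultimately show "sat C (tup_asg C (\<tau> \<circ> a)) \<phi> = sat C (tup_asg C (\<tau> \<circ> b)) \<phi>"
    using a b by metis
qed

lemma closed_fint_aut_image:
  assumes \<tau>: "aut C \<tau>" and N: "N \<subseteq> univ C" "closed_fint C N"
  shows "closed_fint C (\<tau> ` N)"
  unfolding closed_fint_def
proof (intro allI impI)
  fix f xs assume xs: "set xs \<subseteq> \<tau> ` N" "length xs = farity C f"
  let ?ys = "map (inv_into (univ C) \<tau>) xs"
  have ys: "set ?ys \<subseteq> N" using xs aut_inv_into_image[OF \<tau> N(1)] by auto
  have "map \<tau> ?ys = xs"
    unfolding map_map by (rule map_idI) (use xs(1) N(1) aut_f_inv_into[OF \<tau>] aut_in[OF \<tau>] in auto)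
  then have "fint C f xs = \<tau> (fint C f ?ys)"
    using aut_fint[OF \<tau>, of ?ys f] ys N(1) xs(2) by auto
  moreover have "fint C f ?ys \<in> N" using N(2) ys xs(2) unfolding closed_fint_def by auto
  ultimately show "fint C f xs \<in> \<tau> ` N" by auto
qed

lemma elem_sub_aut_image:
  fixes C :: "('a, 'f, 'r) struc"
  assumes ok: "struct_ok C" and \<tau>: "aut C \<tau>" and N: "elem_sub C N"
  shows "elem_sub C (\<tau> ` N)"
proof -
  let ?t = "inv_into (univ C) \<tau>"
  have N_univ: "N \<subseteq> univ C" "N \<noteq> {}" and closed: "closed_fint C N"
    using N elem_sub_closed_fint unfolding elem_sub_def by auto
  have \<tau>N: "\<tau> ` N \<subseteq> univ C" using N_univ aut_in[OF \<tau>] by auto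
  have "sat (C\<lparr>univ := \<tau> ` N\<rparr>) e \<phi> = sat C e \<phi>"
    if \<phi>: "wff C \<phi>" "params \<phi> \<subseteq> \<tau> ` N" and e: "range e \<subseteq> \<tau> ` N"
    for \<phi> :: "('f, 'r, nat, 'a) fm" and e
  proof -
    define e0 where "e0 = ?t \<circ> e"
    define \<phi>0 where "\<phi>0 = map_par ?t \<phi>"
    have e0_back: "\<tau> \<circ> e0 = e"
      unfolding e0_def using e \<tau>N aut_f_inv_into[OF \<tau>] by (intro ext) auto
    have \<phi>0_back: "map_par \<tau> \<phi>0 = \<phi>"
      unfolding \<phi>0_def using \<phi> \<tau>N aut_f_inv_into[OF \<tau>] by (intro map_par_inverse) auto
    have e0: "range e0 \<subseteq> N" unfolding e0_def using e aut_inv_into_image[OF \<tau> N_univ(1)] by auto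
    have \<phi>0: "params \<phi>0 \<subseteq> N" "wff C \<phi>0"
      unfolding \<phi>0_def params_map_par wff_map_par using \<phi> aut_inv_into_image[OF \<tau> N_univ(1)] by auto
    have "sat (C\<lparr>univ := \<tau> ` N\<rparr>) (\<tau> \<circ> e0) (map_par \<tau> \<phi>0) = sat (C\<lparr>univ := N\<rparr>) e0 \<phi>0"
      using sat_map_par[OF \<tau> N_univ(1) closed e0 \<phi>0] .
    also have "\<dots> = sat C e0 \<phi>0" using N \<phi>0 e0 unfolding elem_sub_def by blast
    also have "\<dots> = sat C (\<tau> \<circ> e0) (map_par \<tau> \<phi>0)"
      using sat_aut[OF ok \<tau>, of e0 \<phi>0] e0 \<phi>0 N_univ by auto
    finally show ?thesis unfolding e0_back \<phi>0_back .
  qed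
  then show ?thesis
    using \<tau>N N_univ(2) closed_fint_aut_image[OF \<tau> N_univ(1) closed]
    unfolding elem_sub_def closed_fint_def by blast
qed

section \<open>Homogeneity\<close>

lemma small_image: "small \<kappa> N \<Longrightarrow> small \<kappa> (f ` N)"
  unfolding small_def using card_of_image ordLeq_ordLess_trans by blast

lemma small_subset: "small \<kappa> N \<Longrightarrow> M \<subseteq> N \<Longrightarrow> small \<kappa> M"
  unfolding small_def using card_of_mono1 ordLeq_ordLess_trans by blast

lemma small_Un:
  assumes "Card_order \<kappa>" "small \<kappa> (UNIV :: nat set)" "small \<kappa> A" "small \<kappa> B"
  shows "small \<kappa> (A \<union> B)"
proof -
  have "(card_of (UNIV :: nat set), card_of (Field \<kappa>)) \<in> ordLess"
    using assms(2) card_of_Field_ordIso[OF assms(1)] ordIso_symmetric ordLess_ordIso_trans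
    unfolding small_def by blast
  then have "infinite (Field \<kappa>)"
    using card_of_ordLeq_finite ordLess_imp_ordLeq infinite_UNIV_nat by blast
  then show ?thesis using card_of_Un_ordLess_infinite_Field assms unfolding small_def by blast
qed

lemma monster_small_Un: "monster C \<kappa> \<Longrightarrow> small \<kappa> A \<Longrightarrow> small \<kappa> B \<Longrightarrow> small \<kappa> (A \<union> B)"
  unfolding monster_def using small_Un by blast

lemma tp_eq_par:
  fixes a b :: "'i \<Rightarrow> 'a" and C :: "('a, 'f, 'r) struc"
  assumes "tp_eq C A a b" "a i \<in> A"
  shows "b i = a i"
proof -
  have "lform C A (Eq (Var (Inl i)) (Par (a i)) :: ('f, 'r, 'i + nat, 'a) fm)"
    using assms(2) unfolding lform_def by auto
  then show ?thesis using assms(1) unfolding tp_eq_def by fastforce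
qed

lemma tp_eq_eq:
  fixes a b :: "'i \<Rightarrow> 'a" and C :: "('a, 'f, 'r) struc"
  assumes "tp_eq C A a b" "a i = a j"
  shows "b i = b j"
proof -
  have "lform C A (Eq (Var (Inl i)) (Var (Inl j)) :: ('f, 'r, 'i + nat, 'a) fm)"
    unfolding lform_def by auto
  then show ?thesis using assms unfolding tp_eq_def by fastforce
qed

lemma partial_elem_of_tp_eq:
  fixes a b :: "'i \<Rightarrow> 'a" and C :: "('a, 'f, 'r) struc"
  assumes tp: "tp_eq C A a b" and f: "\<forall>x\<in>A. f x = x" "\<forall>i. f (a i) = b i"
  shows "partial_elem C (A \<union> range a) f"
  unfolding partial_elem_def
proof (intro allI impI)
  fix \<phi> :: "('f, 'r, nat, 'a) fm" and e :: "nat \<Rightarrow> 'a"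
  assume \<phi>: "wff C \<phi>" "params \<phi> = {}" and e: "range e \<subseteq> A \<union> range a"
  define s :: "nat \<Rightarrow> ('f, 'i + nat, 'a) trm" where
    "s n = (if e n \<in> A then Par (e n) else Var (Inl (SOME i. a i = e n)))" for n
  have a_some: "a (SOME i. a i = e n) = e n" if "e n \<notin> A" for n
    using e that by (metis (mono_tags, lifting) UnE range_subsetD rangeE someI)
  have "lform C A (subst_fm 0 s \<phi>)"
    by (rule lform_subst_fm) (use \<phi> in \<open>auto simp: s_def\<close>)
  then have "sat C (tup_asg C a) (subst_fm 0 s \<phi>) = sat C (tup_asg C b) (subst_fm 0 s \<phi>)"
    using tp unfolding tp_eq_def by blast
  moreover have "sat C (tup_asg C a) (subst_fm 0 s \<phi>) = sat C e \<phi>"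
    by (rule sat_subst_fm) (auto simp: s_def a_some)
  moreover have "sat C (tup_asg C b) (subst_fm 0 s \<phi>) = sat C (f \<circ> e) \<phi>"
  proof (rule sat_subst_fm)
    fix n
    have "evt C (tup_asg C b) (s n) = f (e n)"
      using f a_some[of n] unfolding s_def by (cases "e n \<in> A") (simp_all, metis)
    then show "evt C (tup_asg C b) (s n) = (f \<circ> e) n \<and> fvt (s n) \<subseteq> range Inl"
      by (simp add: s_def)
  qed
  ultimately show "sat C e \<phi> = sat C (f \<circ> e) \<phi>" by simp
qed

lemma aut_of_tp_eq:
  fixes C :: "('a, 'f, 'r) struc" and \<kappa> :: "'k rel" and a b :: "'i \<Rightarrow> 'a"
  assumes mon: "monster C \<kappa>" and small_idx: "small \<kappa> (UNIV :: 'i set)"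
    and A: "A \<subseteq> univ C" "small \<kappa> A" and b: "range b \<subseteq> univ C" and a: "range a \<subseteq> univ C"
    and tp: "tp_eq C A a b"
  obtains \<tau> where "aut C \<tau>" "\<forall>x\<in>A. \<tau> x = x" "\<tau> \<circ> a = b"
proof -
  define f where "f x = (if x \<in> A then x else b (SOME i. a i = x))" for x
  have fA: "\<forall>x\<in>A. f x = x" unfolding f_def by simp
  have fa: "\<forall>i. f (a i) = b i"
  proof
    fix i
    have "a (SOME j. a j = a i) = a i" by (rule someI) (rule refl)
    then have "b (SOME j. a j = a i) = b i" by (rule tp_eq_eq[OF tp])
    then show "f (a i) = b i" using tp_eq_par[OF tp, of i] unfolding f_def by auto
  qed
  have "A \<union> range a \<subseteq> univ C" using A(1) a by blast
  moreover have "small \<kappa> (A \<union> range a)"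
    using monster_small_Un[OF mon A(2) small_image[OF small_idx]] .
  moreover have "f ` (A \<union> range a) \<subseteq> univ C" using A(1) b fA fa by auto
  moreover have "strongly_homogeneous \<kappa> C" using mon unfolding monster_def by blast
  ultimately obtain \<tau> where \<tau>: "aut C \<tau>" "\<forall>x\<in>A \<union> range a. \<tau> x = f x"
    using partial_elem_of_tp_eq[OF tp fA fa] unfolding strongly_homogeneous_def by blast
  have "\<tau> \<circ> a = b" using \<tau>(2) fa by auto
  then show ?thesis using that \<tau> fA by simp
qed

section \<open>Saturation for small tuples\<close>

definition finsat :: "('a, 'f, 'r) struc \<Rightarrow> ('f, 'r, 'v, 'a) fm set \<Rightarrow> bool" where
  "finsat C \<Phi> \<longleftrightarrow> (\<forall>F. finite F \<longrightarrow> F \<subseteq> \<Phi> \<longrightarrow> (\<exists>e. range e \<subseteq> univ C \<and> (\<forall>\<phi>\<in>F. sat C e \<phi>)))"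

lemma finsatD:
  "finsat C \<Phi> \<Longrightarrow> finite F \<Longrightarrow> F \<subseteq> \<Phi> \<Longrightarrow> \<exists>e. range e \<subseteq> univ C \<and> (\<forall>\<phi>\<in>F. sat C e \<phi>)"
  unfolding finsat_def by blast

lemma ctype_iff_finsat:
  "ctype C A q \<longleftrightarrow>
    (\<forall>\<phi>\<in>q. lform C A \<phi>) \<and> finsat C q \<and> (\<forall>\<phi>. lform C A \<phi> \<longrightarrow> \<phi> \<in> q \<or> Neg \<phi> \<in> q)"
  unfolding ctype_def finsat_def ..

lemma ctype_complete: "ctype C A q \<Longrightarrow> lform C A \<phi> \<Longrightarrow> \<phi> \<in> q \<or> Neg \<phi> \<in> q"
  unfolding ctype_def by blast

lemma ctype_finsat: "ctype C A q \<Longrightarrow> finsat C q"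
  unfolding ctype_iff_finsat by blast

lemma ctype_lform: "ctype C A q \<Longrightarrow> \<phi> \<in> q \<Longrightarrow> lform C A \<phi>"
  unfolding ctype_def by blast

lemma finsat_Union_chain:
  assumes "ch \<noteq> {}" "subset.chain Z ch" "\<forall>\<Phi>\<in>ch. finsat C \<Phi>"
  shows "finsat C (\<Union>ch)"
  unfolding finsat_def
proof (intro allI impI)
  fix F assume F: "finite F" "F \<subseteq> \<Union>ch"
  obtain \<Phi> where "\<Phi> \<in> ch" "F \<subseteq> \<Phi>" using finite_subset_Union_chain[OF F assms(1,2)] by blast
  then show "\<exists>e. range e \<subseteq> univ C \<and> (\<forall>\<phi>\<in>F. sat C e \<phi>)"
    using F(1) assms(3) unfolding finsat_def by blast
qed

lemma finsat_insert_or_insert_Neg: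
  assumes "finsat C \<Psi>"
  shows "finsat C (insert \<phi> \<Psi>) \<or> finsat C (insert (Neg \<phi>) \<Psi>)"
proof (rule ccontr)
  assume "\<not> ?thesis"
  then obtain F1 F2 where F: "finite F1" "F1 \<subseteq> insert \<phi> \<Psi>" "finite F2" "F2 \<subseteq> insert (Neg \<phi>) \<Psi>"
    and unsat: "\<nexists>e. range e \<subseteq> univ C \<and> (\<forall>\<psi>\<in>F1. sat C e \<psi>)"
      "\<nexists>e. range e \<subseteq> univ C \<and> (\<forall>\<psi>\<in>F2. sat C e \<psi>)"
    unfolding finsat_def by meson
  define F where "F = (F1 - {\<phi>}) \<union> (F2 - {Neg \<phi>})"
  have "finite F" "F \<subseteq> \<Psi>" using F unfolding F_def by auto
  then obtain e where e: "range e \<subseteq> univ C" "\<forall>\<psi>\<in>F. sat C e \<psi>"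
    using assms unfolding finsat_def by blast
  have "\<forall>\<psi>\<in>F1. sat C e \<psi>" if "sat C e \<phi>" using e(2) that unfolding F_def by blast
  moreover have "\<forall>\<psi>\<in>F2. sat C e \<psi>" if "\<not> sat C e \<phi>" using e(2) that unfolding F_def by auto
  ultimately show False using unsat e(1) by blast
qed

lemma ctype_extension:
  assumes \<Phi>: "\<forall>\<phi>\<in>\<Phi>. lform C A \<phi>" "finsat C \<Phi>"
  obtains \<Psi> where "\<Phi> \<subseteq> \<Psi>" "ctype C A \<Psi>"
proof -
  define Z where "Z = {\<Psi>. \<Phi> \<subseteq> \<Psi> \<and> (\<forall>\<phi>\<in>\<Psi>. lform C A \<phi>) \<and> finsat C \<Psi>}"
  have "\<Union>ch \<in> Z" if ch: "ch \<noteq> {}" "subset.chain Z ch" for ch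
  proof -
    have "ch \<subseteq> Z" using ch(2) unfolding subset_chain_def by blast
    then have "finsat C (\<Union>ch)" using finsat_Union_chain[OF ch] unfolding Z_def by blast
    then show ?thesis using \<open>ch \<subseteq> Z\<close> ch(1) unfolding Z_def by blast
  qed
  moreover have "\<Phi> \<in> Z" using \<Phi> unfolding Z_def by blast
  ultimately obtain \<Psi> where \<Psi>: "\<Psi> \<in> Z" and max: "\<forall>X\<in>Z. \<Psi> \<subseteq> X \<longrightarrow> X = \<Psi>"
    using subset_Zorn_nonempty[of Z] by blast
  have "\<phi> \<in> \<Psi> \<or> Neg \<phi> \<in> \<Psi>" if \<phi>: "lform C A \<phi>" for \<phi>
  proof -
    obtain \<psi> where \<psi>: "\<psi> \<in> {\<phi>, Neg \<phi>}" "finsat C (insert \<psi> \<Psi>)"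
      using finsat_insert_or_insert_Neg[of C \<Psi> \<phi>] \<Psi> unfolding Z_def by blast
    moreover from \<psi>(1) have "lform C A \<psi>" using \<phi> unfolding lform_def by auto
    ultimately have "insert \<psi> \<Psi> \<in> Z" using \<Psi> unfolding Z_def by blast
    then have "insert \<psi> \<Psi> = \<Psi>" using max by blast
    then show ?thesis using \<psi>(1) by blast
  qed
  then have "ctype C A \<Psi>" using \<Psi> unfolding Z_def ctype_iff_finsat by blast
  then show ?thesis using \<Psi> that unfolding Z_def by blast
qed

lemma ctype_consequence:
  assumes \<Psi>: "ctype C A \<Psi>" and F: "finite F" "F \<subseteq> \<Psi>" and \<theta>: "lform C A \<theta>"
    and entails: "\<And>e. range e \<subseteq> univ C \<Longrightarrow> \<forall>\<phi>\<in>F. sat C e \<phi> \<Longrightarrow> sat C e \<theta>"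
  shows "\<theta> \<in> \<Psi>"
proof (rule ccontr)
  assume "\<theta> \<notin> \<Psi>"
  then have "insert (Neg \<theta>) F \<subseteq> \<Psi>" using ctype_complete[OF \<Psi> \<theta>] F(2) by simp
  then obtain e where "range e \<subseteq> univ C" "\<forall>\<phi>\<in>insert (Neg \<theta>) F. sat C e \<phi>"
    using ctype_finsat[OF \<Psi>] F(1) unfolding finsat_def by (meson finite_insert)
  then show False using entails[of e] by simp
qed

lemma sat_foldr_Conj: "sat S e (foldr Conj \<phi>s \<psi>) = (sat S e \<psi> \<and> (\<forall>\<phi>\<in>set \<phi>s. sat S e \<phi>))"
  by (induction \<phi>s) auto

lemma params_foldr_Conj: "params (foldr Conj \<phi>s \<psi>) = params \<psi> \<union> (\<Union>\<phi>\<in>set \<phi>s. params \<phi>)"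
  by (induction \<phi>s) auto

lemma wff_foldr_Conj: "wff S (foldr Conj \<phi>s \<psi>) = (wff S \<psi> \<and> (\<forall>\<phi>\<in>set \<phi>s. wff S \<phi>))"
  by (induction \<phi>s) auto

lemma fv_foldr_Ex: "fv (foldr Ex vs \<phi>) = fv \<phi> - set vs"
  by (induction vs) auto

lemma params_foldr_Ex: "params (foldr Ex vs \<phi>) = params \<phi>"
  by (induction vs) auto

lemma wff_foldr_Ex: "wff S (foldr Ex vs \<phi>) = wff S \<phi>"
  by (induction vs) auto

lemma sat_foldr_Ex:
  "sat S e (foldr Ex vs \<phi>) \<longleftrightarrow>
    (\<exists>e'. (\<forall>w. w \<notin> set vs \<longrightarrow> e' w = e w) \<and> (\<forall>w\<in>set vs. e' w \<in> univ S) \<and> sat S e' \<phi>)"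
proof (induction vs arbitrary: e)
  case Nil
  have "(\<forall>w. e' w = e w) \<longleftrightarrow> e' = e" for e' by (simp add: fun_eq_iff)
  then show ?case by simp
next
  case (Cons v vs)
  show ?case
  proof
    assume "sat S e (foldr Ex (v # vs) \<phi>)"
    then obtain b where b: "b \<in> univ S" "sat S (e(v := b)) (foldr Ex vs \<phi>)" by auto
    then obtain e' where e': "\<forall>w. w \<notin> set vs \<longrightarrow> e' w = (e(v := b)) w"
      "\<forall>w\<in>set vs. e' w \<in> univ S" "sat S e' \<phi>"
      using Cons.IH[of "e(v := b)"] by blast
    have "\<forall>w\<in>set (v # vs). e' w \<in> univ S"
    proof
      fix w assume "w \<in> set (v # vs)"
      then show "e' w \<in> univ S" using e'(1,2) b by (cases "w \<in> set vs") auto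
    qed
    moreover have "\<forall>w. w \<notin> set (v # vs) \<longrightarrow> e' w = e w" using e'(1) by auto
    ultimately show "\<exists>e'. (\<forall>w. w \<notin> set (v # vs) \<longrightarrow> e' w = e w) \<and>
        (\<forall>w\<in>set (v # vs). e' w \<in> univ S) \<and> sat S e' \<phi>"
      using e'(3) by (intro exI[of _ e'] conjI)
  next
    assume "\<exists>e'. (\<forall>w. w \<notin> set (v # vs) \<longrightarrow> e' w = e w) \<and> (\<forall>w\<in>set (v # vs). e' w \<in> univ S) \<and>
        sat S e' \<phi>"
    then obtain e' where e': "\<forall>w. w \<notin> set (v # vs) \<longrightarrow> e' w = e w"
      "\<forall>w\<in>set (v # vs). e' w \<in> univ S" "sat S e' \<phi>"
      by blast
    have "\<forall>w. w \<notin> set vs \<longrightarrow> e' w = (e(v := e' v)) w" using e'(1) by auto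
    moreover have "\<forall>w\<in>set vs. e' w \<in> univ S" using e'(2) by simp
    ultimately have "sat S (e(v := e' v)) (foldr Ex vs \<phi>)"
      unfolding Cons.IH[of "e(v := e' v)"] using e'(3) by (intro exI[of _ e'] conjI)
    then show "sat S e (foldr Ex (v # vs) \<phi>)" using e'(2) by auto
  qed
qed

lemma finite_conj_closure:
  fixes F :: "('f, 'r, 'v, 'a) fm set"
  assumes "finite F"
  obtains \<theta> where "fv \<theta> \<subseteq> {v}" "params \<theta> = (\<Union>\<phi>\<in>F. params \<phi>)" "(\<forall>\<phi>\<in>F. wff S \<phi>) \<Longrightarrow> wff S \<theta>"
    "\<And>e. range e \<subseteq> univ S \<Longrightarrow>
       sat S e \<theta> \<longleftrightarrow> (\<exists>e'. range e' \<subseteq> univ S \<and> e' v = e v \<and> (\<forall>\<phi>\<in>F. sat S e' \<phi>))"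
proof -
  obtain \<phi>s where \<phi>s: "set \<phi>s = F" using finite_list[OF assms] by blast
  define \<theta>0 where "\<theta>0 = foldr Conj \<phi>s (Eq (Var v) (Var v))"
  obtain ws where ws: "set ws = fv \<theta>0 - {v}" using finite_list[of "fv \<theta>0 - {v}"] finite_fv by blast
  define \<theta> where "\<theta> = foldr Ex ws \<theta>0"
  have sat: "sat S e \<theta> \<longleftrightarrow> (\<exists>e'. range e' \<subseteq> univ S \<and> e' v = e v \<and> (\<forall>\<phi>\<in>F. sat S e' \<phi>))"
    if e: "range e \<subseteq> univ S" for e
  proof
    assume "sat S e \<theta>"
    then obtain e' where e': "\<forall>w. w \<notin> set ws \<longrightarrow> e' w = e w" "\<forall>w\<in>set ws. e' w \<in> univ S"
      "sat S e' \<theta>0"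
      unfolding \<theta>_def sat_foldr_Ex by blast
    have "e' w \<in> univ S" for w using e' e by (cases "w \<in> set ws") auto
    moreover have "e' v = e v" using e'(1) ws by simp
    moreover have "\<forall>\<phi>\<in>F. sat S e' \<phi>" using e'(3) \<phi>s unfolding \<theta>0_def sat_foldr_Conj by simp
    ultimately show "\<exists>e'. range e' \<subseteq> univ S \<and> e' v = e v \<and> (\<forall>\<phi>\<in>F. sat S e' \<phi>)" by blast
  next
    assume "\<exists>e'. range e' \<subseteq> univ S \<and> e' v = e v \<and> (\<forall>\<phi>\<in>F. sat S e' \<phi>)"
    then obtain e' where e': "range e' \<subseteq> univ S" "e' v = e v" "\<forall>\<phi>\<in>F. sat S e' \<phi>" by blast
    define e'' where "e'' w = (if w \<in> set ws then e' w else e w)" for w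
    have "sat S e'' \<theta>0 = sat S e' \<theta>0" by (rule sat_cong) (use ws e'(2) in \<open>auto simp: e''_def\<close>)
    then have "sat S e'' \<theta>0" using e'(3) \<phi>s unfolding \<theta>0_def sat_foldr_Conj by simp
    moreover have "\<forall>w\<in>set ws. e'' w \<in> univ S" using e'(1) by (auto simp: e''_def)
    ultimately show "sat S e \<theta>"
      unfolding \<theta>_def sat_foldr_Ex by (intro exI[of _ e''] conjI) (simp_all add: e''_def)
  qed
  have "fv \<theta> \<subseteq> {v}" unfolding \<theta>_def fv_foldr_Ex ws by auto
  moreover have "params \<theta> = (\<Union>\<phi>\<in>F. params \<phi>)"
    unfolding \<theta>_def \<theta>0_def params_foldr_Ex params_foldr_Conj \<phi>s by simp
  moreover have "wff S \<theta>" if "\<forall>\<phi>\<in>F. wff S \<phi>"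
    unfolding \<theta>_def \<theta>0_def wff_foldr_Ex wff_foldr_Conj \<phi>s using that by simp
  ultimately show ?thesis using that sat by presburger
qed

definition at_var :: "'i \<Rightarrow> ('f, 'r, unit + nat, 'a) fm \<Rightarrow> ('f, 'r, 'i + nat, 'a) fm" where
  "at_var k \<chi> = subst_fm 0 (case_sum (\<lambda>_. Var (Inl k)) (\<lambda>n. Var (Inr n))) \<chi>"

lemma sat_at_var: "fv \<chi> \<subseteq> range Inl \<Longrightarrow> sat S e (at_var k \<chi>) = sat S (\<lambda>_. e (Inl k)) \<chi>"
  unfolding at_var_def by (rule sat_subst_fm) auto

lemma lform_at_var: "lform C A \<chi> \<Longrightarrow> lform C A (at_var k \<chi>)"
  unfolding at_var_def lform_def by (rule lform_subst_fm[unfolded lform_def]) (auto split: sum.split)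

lemma at_var_Neg: "at_var k (Neg \<chi>) = Neg (at_var k \<chi>)"
  by (simp add: at_var_def)

lemma ctype_at_var:
  fixes \<Psi> :: "('f, 'r, 'i + nat, 'a) fm set"
  assumes \<Psi>: "ctype C A \<Psi>"
  shows "ctype C A {\<chi>. lform C A \<chi> \<and> at_var k \<chi> \<in> \<Psi>}"
  unfolding ctype_iff_finsat
proof (intro conjI allI impI ballI)
  show "finsat C {\<chi>. lform C A \<chi> \<and> at_var k \<chi> \<in> \<Psi>}"
    unfolding finsat_def
  proof (intro allI impI)
    fix F assume F: "finite F" "F \<subseteq> {\<chi>. lform C A \<chi> \<and> at_var k \<chi> \<in> \<Psi>}"
    have fin: "finite (at_var k ` F)" and sub: "at_var k ` F \<subseteq> \<Psi>" using F by auto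
    obtain e where e: "range e \<subseteq> univ C" "\<forall>\<phi>\<in>at_var k ` F. sat C e \<phi>"
      using finsatD[OF ctype_finsat[OF \<Psi>] fin sub] by blast
    have "sat C (\<lambda>_. e (Inl k)) \<chi>" if "\<chi> \<in> F" for \<chi>
    proof -
      have "fv \<chi> \<subseteq> range Inl" using F(2) that unfolding lform_def by blast
      then show ?thesis using e(2) that sat_at_var[of \<chi> C e k] by simp
    qed
    moreover have "range (\<lambda>_. e (Inl k)) \<subseteq> univ C" using e(1) by auto
    ultimately show "\<exists>e. range e \<subseteq> univ C \<and> (\<forall>\<chi>\<in>F. sat C e \<chi>)"
      by (intro exI[of _ "\<lambda>_. e (Inl k)"]) blast
  qed
next
  fix \<chi> :: "('f, 'r, unit + nat, 'a) fm" assume \<chi>: "lform C A \<chi>"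
  then have "lform C A (Neg \<chi>)" unfolding lform_def by simp
  moreover have "at_var k \<chi> \<in> \<Psi> \<or> Neg (at_var k \<chi>) \<in> \<Psi>"
    using ctype_complete[OF \<Psi> lform_at_var[OF \<chi>]] .
  ultimately show "\<chi> \<in> {\<chi>. lform C A \<chi> \<and> at_var k \<chi> \<in> \<Psi>} \<or> Neg \<chi> \<in> {\<chi>. lform C A \<chi> \<and> at_var k \<chi> \<in> \<Psi>}"
    using \<chi> by (simp add: at_var_Neg)
qed simp

lemma sat_of_realizes_at_var:
  fixes \<Psi> :: "('f, 'r, 'i + nat, 'a) fm set"
  assumes \<Psi>: "ctype C A \<Psi>" and c: "realizes C {\<chi>. lform C A \<chi> \<and> at_var k \<chi> \<in> \<Psi>} c"
    and \<theta>: "\<theta> \<in> \<Psi>" "fv \<theta> \<subseteq> {Inl k}"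
  shows "sat C (\<lambda>_. c ()) \<theta>"
proof -
  define \<chi> :: "('f, 'r, unit + nat, 'a) fm" where "\<chi> = subst_fm 0 (\<lambda>_. Var (Inl ())) \<theta>"
  have sat_\<chi>: "sat C e \<chi> = sat C (\<lambda>_. e (Inl ())) \<theta>" for e
    unfolding \<chi>_def by (rule sat_subst_fm) auto
  have lform_\<theta>: "lform C A \<theta>" using ctype_lform[OF \<Psi> \<theta>(1)] .
  then have lform_\<chi>: "lform C A \<chi>"
    unfolding \<chi>_def by (intro lform_subst_fm) (auto simp: lform_def)
  have "at_var k \<chi> \<in> \<Psi>"
  proof (rule ctype_consequence[OF \<Psi> _ _ lform_at_var[OF lform_\<chi>]])
    fix e assume "\<forall>\<phi>\<in>{\<theta>}. sat C e \<phi>"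
    have "sat C e (at_var k \<chi>) = sat C (\<lambda>_. e (Inl k)) \<chi>"
      using lform_\<chi> sat_at_var[of \<chi> C e k] unfolding lform_def by blast
    also have "\<dots> = sat C (\<lambda>_. e (Inl k)) \<theta>" using sat_\<chi> by simp
    also have "\<dots> = sat C e \<theta>" by (rule sat_cong) (use \<theta>(2) in auto)
    finally show "sat C e (at_var k \<chi>)" using \<open>\<forall>\<phi>\<in>{\<theta>}. sat C e \<phi>\<close> by simp
  qed (use \<theta>(1) in auto)
  then have "sat C (tup_asg C c) \<chi>" using c lform_\<chi> unfolding realizes_def by blast
  then show ?thesis unfolding sat_\<chi> by simp
qed

lemma finsat_insert_var_eq:
  fixes C :: "('a, 'f, 'r) struc" and \<kappa> :: "'k rel" and \<Phi> :: "('f, 'r, 'i + nat, 'a) fm set"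
  assumes mon: "monster C \<kappa>" and A: "A \<subseteq> univ C" "small \<kappa> A"
    and \<Phi>: "\<forall>\<phi>\<in>\<Phi>. lform C A \<phi>" "finsat C \<Phi>"
  obtains c where "c \<in> univ C" "finsat C (insert (Eq (Var (Inl k)) (Par c)) \<Phi>)"
proof -
  obtain \<Psi> where \<Psi>: "\<Phi> \<subseteq> \<Psi>" "ctype C A \<Psi>" using ctype_extension[OF \<Phi>] .
  obtain c' where c': "realizes C {\<chi>. lform C A \<chi> \<and> at_var k \<chi> \<in> \<Psi>} c'"
    using mon ctype_at_var[OF \<Psi>(2)] A unfolding monster_def saturated_def by blast
  define c where "c = c' ()"
  have c_univ: "c \<in> univ C" using c' unfolding realizes_def c_def by auto
  have "finsat C (insert (Eq (Var (Inl k)) (Par c)) \<Phi>)"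
    unfolding finsat_def
  proof (intro allI impI)
    fix F assume F: "finite F" "F \<subseteq> insert (Eq (Var (Inl k)) (Par c)) \<Phi>"
    let ?F = "F - {Eq (Var (Inl k)) (Par c)}"
    have F': "finite ?F" "?F \<subseteq> \<Phi>" using F by auto
    obtain \<theta> :: "('f, 'r, 'i + nat, 'a) fm" where \<theta>: "fv \<theta> \<subseteq> {Inl k}" "params \<theta> = (\<Union>\<phi>\<in>?F. params \<phi>)"
      "(\<forall>\<phi>\<in>?F. wff C \<phi>) \<Longrightarrow> wff C \<theta>"
      "\<And>e. range e \<subseteq> univ C \<Longrightarrow>
         sat C e \<theta> \<longleftrightarrow> (\<exists>e'. range e' \<subseteq> univ C \<and> e' (Inl k) = e (Inl k) \<and> (\<forall>\<phi>\<in>?F. sat C e' \<phi>))"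
      using finite_conj_closure[OF F'(1)] by blast
    have "lform C A \<theta>" using \<theta>(1-3) F'(2) \<Phi>(1) unfolding lform_def by blast
    then have "\<theta> \<in> \<Psi>"
      by (rule ctype_consequence[OF \<Psi>(2) F'(1) order_trans[OF F'(2) \<Psi>(1)]]) (use \<theta>(4) in blast)
    then have "sat C (\<lambda>_. c) \<theta>" using sat_of_realizes_at_var[OF \<Psi>(2) c'] \<theta>(1) c_def by blast
    then obtain e where "range e \<subseteq> univ C" "e (Inl k) = c" "\<forall>\<phi>\<in>?F. sat C e \<phi>"
      using \<theta>(4)[of "\<lambda>_. c"] c_univ by auto
    then show "\<exists>e. range e \<subseteq> univ C \<and> (\<forall>\<phi>\<in>F. sat C e \<phi>)" by (intro exI[of _ e]) auto
  qed
  then show ?thesis using that c_univ by blast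
qed

definition var_eqs :: "('i \<times> 'a) set \<Rightarrow> ('f, 'r, 'i + nat, 'a) fm set" where
  "var_eqs G = (\<lambda>(j, a). Eq (Var (Inl j)) (Par a)) ` G"

lemma var_eqs_insert: "var_eqs (insert (j, a) G) = insert (Eq (Var (Inl j)) (Par a)) (var_eqs G)"
  by (simp add: var_eqs_def)

lemma mem_var_eqs: "(j, a) \<in> G \<Longrightarrow> Eq (Var (Inl j)) (Par a) \<in> var_eqs G"
  by (force simp: var_eqs_def)

lemma finsat_var_eq_in_univ:
  assumes "finsat C \<Phi>" "Eq (Var v) (Par a) \<in> \<Phi>"
  shows "a \<in> univ C"
proof -
  obtain e where "range e \<subseteq> univ C" "sat C e (Eq (Var v) (Par a))"
    using finsatD[OF assms(1), of "{Eq (Var v) (Par a)}"] assms(2) by auto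
  then show ?thesis by auto
qed

lemma finsat_var_eq_unique:
  assumes "finsat C \<Phi>" "Eq (Var v) (Par a) \<in> \<Phi>" "Eq (Var v) (Par a') \<in> \<Phi>"
  shows "a = a'"
proof -
  obtain e where "sat C e (Eq (Var v) (Par a))" "sat C e (Eq (Var v) (Par a'))"
    using finsatD[OF assms(1), of "{Eq (Var v) (Par a), Eq (Var v) (Par a')}"] assms(2,3) by auto
  then show ?thesis by simp
qed

lemma finsat_var_eqs_extend:
  fixes C :: "('a, 'f, 'r) struc" and \<kappa> :: "'k rel" and \<Phi> :: "('f, 'r, 'i + nat, 'a) fm set"
  assumes mon: "monster C \<kappa>" and small_idx: "small \<kappa> (UNIV :: 'i set)"
    and A: "A \<subseteq> univ C" "small \<kappa> A" and \<Phi>: "\<forall>\<phi>\<in>\<Phi>. lform C A \<phi>"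
    and fs: "finsat C (\<Phi> \<union> var_eqs G)"
  obtains c where "finsat C (\<Phi> \<union> var_eqs (insert (k, c) G))"
proof -
  have G_eq: "Eq (Var (Inl j)) (Par a) \<in> \<Phi> \<union> var_eqs G" if "(j, a) \<in> G" for j a
    using mem_var_eqs[OF that] by blast
  have "Range G \<subseteq> univ C"
    using finsat_var_eq_in_univ[OF fs G_eq] by blast
  then have A': "A \<union> Range G \<subseteq> univ C" using A(1) by blast
  have "Range G \<subseteq> range (\<lambda>j. SOME a. (j, a) \<in> G)"
  proof
    fix a assume "a \<in> Range G"
    then obtain j where j: "(j, a) \<in> G" by blast
    then have "(j, SOME a. (j, a) \<in> G) \<in> G" by (rule someI)
    then have "(SOME a. (j, a) \<in> G) = a" by (rule finsat_var_eq_unique[OF fs G_eq G_eq[OF j]])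
    then show "a \<in> range (\<lambda>j. SOME a. (j, a) \<in> G)" by (metis rangeI)
  qed
  then have "small \<kappa> (Range G)" by (rule small_subset[OF small_image[OF small_idx]])
  then have small_A': "small \<kappa> (A \<union> Range G)" by (rule monster_small_Un[OF mon A(2)])
  have "lform C (A \<union> Range G) \<phi>" if "\<phi> \<in> \<Phi> \<union> var_eqs G" for \<phi>
    using that \<Phi> unfolding var_eqs_def lform_def by auto
  then obtain c where "c \<in> univ C" "finsat C (insert (Eq (Var (Inl k)) (Par c)) (\<Phi> \<union> var_eqs G))"
    using finsat_insert_var_eq[OF mon A' small_A' _ fs] by blast
  then show ?thesis using that[of c] by (simp add: var_eqs_insert)
qed

lemma realizes_of_total_var_eqs:
  assumes fs: "finsat C (\<Phi> \<union> var_eqs G)" and \<Phi>: "\<forall>\<phi>\<in>\<Phi>. fv \<phi> \<subseteq> range Inl"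
    and b: "\<forall>j. (j, b j) \<in> G"
  shows "realizes C \<Phi> b"
proof -
  have b_eq: "Eq (Var (Inl j)) (Par (b j)) \<in> var_eqs G" for j
    using b by (simp add: mem_var_eqs)
  have "b j \<in> univ C" for j by (rule finsat_var_eq_in_univ[OF fs, of "Inl j"]) (simp add: b_eq)
  moreover have "sat C (tup_asg C b) \<phi>" if \<phi>: "\<phi> \<in> \<Phi>" for \<phi>
  proof -
    define F where "F = insert \<phi> ((\<lambda>j. Eq (Var (Inl j)) (Par (b j))) ` (Inl -` fv \<phi>))"
    have "finite F"
      unfolding F_def using finite_vimageI[OF finite_fv[of \<phi>] inj_Inl] by simp
    moreover have "F \<subseteq> \<Phi> \<union> var_eqs G" unfolding F_def using \<phi> b_eq by auto
    ultimately obtain e where e: "\<forall>\<psi>\<in>F. sat C e \<psi>" using finsatD[OF fs] by meson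
    have "e v = tup_asg C b v" if v: "v \<in> fv \<phi>" for v
    proof -
      obtain j where j: "v = Inl j" using \<Phi> \<phi> v by blast
      then have "Eq (Var (Inl j)) (Par (b j)) \<in> F" unfolding F_def using v by simp
      then show ?thesis using e j by fastforce
    qed
    then have "sat C e \<phi> = sat C (tup_asg C b) \<phi>" by (intro sat_cong ballI)
    then show ?thesis using e unfolding F_def by simp
  qed
  ultimately show ?thesis unfolding realizes_def by blast
qed

lemma finsat_var_eqs_Union_chain:
  assumes ch: "ch \<noteq> {}" "subset.chain {G. finsat C (\<Phi> \<union> var_eqs G)} ch"
  shows "finsat C (\<Phi> \<union> var_eqs (\<Union>ch))"
proof -
  let ?ch = "(\<lambda>G. \<Phi> \<union> var_eqs G) ` ch"
  have "subset.chain UNIV ?ch" unfolding subset_chain_def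
  proof (intro conjI ballI subset_UNIV)
    fix X Y assume "X \<in> ?ch" "Y \<in> ?ch"
    then obtain G1 G2 where "G1 \<in> ch" "G2 \<in> ch" "X = \<Phi> \<union> var_eqs G1" "Y = \<Phi> \<union> var_eqs G2"
      by blast
    moreover from this(1,2) have "G1 \<subseteq> G2 \<or> G2 \<subseteq> G1"
      using ch(2) unfolding subset_chain_def by blast
    ultimately show "X \<subseteq> Y \<or> Y \<subseteq> X" unfolding var_eqs_def by blast
  qed
  moreover have "\<forall>X\<in>?ch. finsat C X" using ch(2) unfolding subset_chain_def by blast
  ultimately have "finsat C (\<Union>?ch)" using finsat_Union_chain[of ?ch] ch(1) by blast
  moreover have "\<Union>?ch = \<Phi> \<union> var_eqs (\<Union>ch)" using ch(1) unfolding var_eqs_def by blast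
  ultimately show ?thesis by simp
qed

text \<open>Zorn's lemma gives a maximal consistent assignment of parameters to the variables; it is
  total by the one-variable case.\<close>

lemma realizes_of_finsat:
  fixes C :: "('a, 'f, 'r) struc" and \<kappa> :: "'k rel" and \<Phi> :: "('f, 'r, 'i + nat, 'a) fm set"
  assumes mon: "monster C \<kappa>" and small_idx: "small \<kappa> (UNIV :: 'i set)"
    and A: "A \<subseteq> univ C" "small \<kappa> A" and \<Phi>: "\<forall>\<phi>\<in>\<Phi>. lform C A \<phi>" "finsat C \<Phi>"
  obtains b where "realizes C \<Phi> b"
proof -
  define Z where "Z = {G. finsat C (\<Phi> \<union> var_eqs G)}"
  have "\<Union>ch \<in> Z" if "ch \<noteq> {}" "subset.chain Z ch" for ch
    using finsat_var_eqs_Union_chain[OF that[unfolded Z_def]] unfolding Z_def by blast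
  moreover have "{} \<in> Z" using \<Phi>(2) unfolding Z_def var_eqs_def by simp
  ultimately obtain G where G: "G \<in> Z" and max: "\<forall>X\<in>Z. G \<subseteq> X \<longrightarrow> X = G"
    using subset_Zorn_nonempty[of Z] by blast
  have total: "\<forall>j. (j, SOME a. (j, a) \<in> G) \<in> G"
  proof
    fix j
    obtain c where "insert (j, c) G \<in> Z"
      using finsat_var_eqs_extend[OF mon small_idx A \<Phi>(1), of G j] G unfolding Z_def by blast
    then have "(j, c) \<in> G" using max by blast
    then show "(j, SOME a. (j, a) \<in> G) \<in> G" by (rule someI)
  qed
  have "\<forall>\<phi>\<in>\<Phi>. fv \<phi> \<subseteq> range Inl" using \<Phi>(1) unfolding lform_def by blast
  moreover have "finsat C (\<Phi> \<union> var_eqs G)" using G unfolding Z_def by blast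
  ultimately have "realizes C \<Phi> (\<lambda>j. SOME a. (j, a) \<in> G)"
    by (rule realizes_of_total_var_eqs[OF _ _ total, rotated])
  then show ?thesis by (rule that)
qed

section \<open>Lascar chains\<close>

lemma restr_mono: "B \<subseteq> B' \<Longrightarrow> restr q B \<subseteq> restr q B'"
  unfolding restr_def by blast

lemma realizes_subset: "realizes C q' b \<Longrightarrow> q \<subseteq> q' \<Longrightarrow> realizes C q b"
  unfolding realizes_def by blast

lemma realizes_restr_tp_eq:
  fixes c d :: "'i \<Rightarrow> 'a" and C :: "('a, 'f, 'r) struc"
  assumes q: "ctype C (univ C) q" and B: "B \<subseteq> univ C"
    and c: "realizes C (restr q B) c" and d: "realizes C (restr q B) d"
  shows "tp_eq C B c d"
  unfolding tp_eq_def
proof (intro allI impI)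
  fix \<phi> :: "('f, 'r, 'i + nat, 'a) fm"
  assume \<phi>: "lform C B \<phi>"
  then have "lform C (univ C) \<phi>" using B unfolding lform_def by blast
  then have "\<phi> \<in> restr q B \<or> Neg \<phi> \<in> restr q B"
    using ctype_complete[OF q] \<phi> unfolding restr_def lform_def by auto
  then show "sat C (tup_asg C c) \<phi> = sat C (tup_asg C d) \<phi>"
    using c d unfolding realizes_def by auto
qed

definition model_tp_eq :: "('a, 'f, 'r) struc \<Rightarrow> 'k rel \<Rightarrow> ('i \<Rightarrow> 'a) \<Rightarrow> ('i \<Rightarrow> 'a) \<Rightarrow> bool" where
  "model_tp_eq C \<kappa> a b \<longleftrightarrow> (\<exists>N. elem_sub C N \<and> small \<kappa> N \<and> tp_eq C N a b)"

lemma model_tp_eq_sym: "model_tp_eq C \<kappa> a b \<Longrightarrow> model_tp_eq C \<kappa> b a"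
  unfolding model_tp_eq_def using tp_eq_sym by blast

lemma model_tp_eq_aut_image:
  assumes ok: "struct_ok C" and \<rho>: "aut C \<rho>" and a: "range a \<subseteq> univ C" and b: "range b \<subseteq> univ C"
    and ab: "model_tp_eq C \<kappa> a b"
  shows "model_tp_eq C \<kappa> (\<rho> \<circ> a) (\<rho> \<circ> b)"
proof -
  obtain N where N: "elem_sub C N" "small \<kappa> N" "tp_eq C N a b"
    using ab unfolding model_tp_eq_def by blast
  have "N \<subseteq> univ C" using N(1) unfolding elem_sub_def by blast
  then have "tp_eq C (\<rho> ` N) (\<rho> \<circ> a) (\<rho> \<circ> b)" by (rule tp_eq_aut_image[OF ok \<rho> _ a b N(3)])
  then show ?thesis
    using elem_sub_aut_image[OF ok \<rho> N(1)] small_image[OF N(2)] unfolding model_tp_eq_def by blast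
qed

lemma model_tp_eq_inv_into:
  assumes ok: "struct_ok C" and \<sigma>: "aut C \<sigma>" and \<alpha>: "range \<alpha> \<subseteq> univ C"
    and \<sigma>\<alpha>: "model_tp_eq C \<kappa> \<alpha> (\<sigma> \<circ> \<alpha>)"
  shows "model_tp_eq C \<kappa> \<alpha> (inv_into (univ C) \<sigma> \<circ> \<alpha>)"
proof -
  let ?\<tau> = "inv_into (univ C) \<sigma>"
  have "range (\<sigma> \<circ> \<alpha>) \<subseteq> univ C" using \<alpha> aut_in[OF \<sigma>] by auto
  then have "model_tp_eq C \<kappa> (?\<tau> \<circ> \<alpha>) (?\<tau> \<circ> (\<sigma> \<circ> \<alpha>))"
    by (rule model_tp_eq_aut_image[OF ok aut_inv_into[OF ok \<sigma>] \<alpha> _ \<sigma>\<alpha>])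
  then have "model_tp_eq C \<kappa> (?\<tau> \<circ> \<alpha>) \<alpha>" unfolding inv_into_comp_aut[OF \<sigma> \<alpha>] .
  then show ?thesis by (rule model_tp_eq_sym)
qed

lemma realizes_restr_of_ctype:
  fixes C :: "('a, 'f, 'r) struc" and \<kappa> :: "'k rel" and q :: "('f, 'r, 'i + nat, 'a) fm set"
  assumes mon: "monster C \<kappa>" and small_idx: "small \<kappa> (UNIV :: 'i set)"
    and q: "ctype C (univ C) q" and A: "A \<subseteq> univ C" "small \<kappa> A"
  obtains \<gamma> where "realizes C (restr q A) \<gamma>"
proof -
  have "\<forall>\<phi>\<in>restr q A. lform C A \<phi>"
    using ctype_lform[OF q] unfolding restr_def lform_def by blast
  moreover have "finsat C (restr q A)"
    using ctype_finsat[OF q] unfolding restr_def finsat_def by blast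
  ultimately show ?thesis using realizes_of_finsat[OF mon small_idx A] that by blast
qed

lemma model_tp_eq_of_A_set:
  fixes C :: "('a, 'f, 'r) struc" and \<kappa> :: "'k rel" and q :: "('f, 'r, 'i + nat, 'a) fm set"
  assumes mon: "monster C \<kappa>" and small_idx: "small \<kappa> (UNIV :: 'i set)"
    and q: "ctype C (univ C) q" and M: "elem_sub C M" "small \<kappa> M"
    and \<alpha>: "realizes C (restr q M) \<alpha>" and \<sigma>: "\<sigma> \<in> A_set C (restr q (range \<alpha>)) \<alpha>"
  shows "model_tp_eq C \<kappa> \<alpha> (\<sigma> \<circ> \<alpha>)"
proof -
  have ok: "struct_ok C" using mon unfolding monster_def by blast
  have M_univ: "M \<subseteq> univ C" using M(1) unfolding elem_sub_def by blast
  have \<alpha>_univ: "range \<alpha> \<subseteq> univ C" using \<alpha> unfolding realizes_def by blast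
  have \<sigma>\<alpha>: "realizes C (restr q (range \<alpha>)) (\<sigma> \<circ> \<alpha>)" using \<sigma> unfolding A_set_def by blast
  then have \<sigma>\<alpha>_univ: "range (\<sigma> \<circ> \<alpha>) \<subseteq> univ C" unfolding realizes_def by blast
  have "M \<union> range \<alpha> \<subseteq> univ C" "small \<kappa> (M \<union> range \<alpha>)"
    using M_univ \<alpha>_univ monster_small_Un[OF mon M(2) small_image[OF small_idx]] by auto
  then obtain \<gamma> where \<gamma>: "realizes C (restr q (M \<union> range \<alpha>)) \<gamma>"
    using realizes_restr_of_ctype[OF mon small_idx q] by blast
  then have \<gamma>_univ: "range \<gamma> \<subseteq> univ C" unfolding realizes_def by blast
  have "tp_eq C (range \<alpha>) (\<sigma> \<circ> \<alpha>) \<gamma>"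
    using realizes_restr_tp_eq[OF q \<alpha>_univ \<sigma>\<alpha>] realizes_subset[OF \<gamma> restr_mono] by blast
  then obtain f where f: "aut C f" "\<forall>x\<in>range \<alpha>. f x = x" "f \<circ> (\<sigma> \<circ> \<alpha>) = \<gamma>"
    using aut_of_tp_eq[OF mon small_idx \<alpha>_univ small_image[OF small_idx] \<gamma>_univ \<sigma>\<alpha>_univ] by blast
  have "tp_eq C M \<alpha> \<gamma>"
    using realizes_restr_tp_eq[OF q M_univ \<alpha>] realizes_subset[OF \<gamma> restr_mono] by blast
  then have "model_tp_eq C \<kappa> \<alpha> \<gamma>" using M unfolding model_tp_eq_def by blast
  then have "model_tp_eq C \<kappa> (inv_into (univ C) f \<circ> \<alpha>) (inv_into (univ C) f \<circ> \<gamma>)"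
    by (rule model_tp_eq_aut_image[OF ok aut_inv_into[OF ok f(1)] \<alpha>_univ \<gamma>_univ])
  moreover have "f \<circ> \<alpha> = \<alpha>" using f(2) by (intro ext) simp
  then have "inv_into (univ C) f \<circ> \<alpha> = \<alpha>" using inv_into_comp_aut[OF f(1) \<alpha>_univ] by simp
  moreover have "inv_into (univ C) f \<circ> \<gamma> = \<sigma> \<circ> \<alpha>"
    using inv_into_comp_aut[OF f(1) \<sigma>\<alpha>_univ] unfolding f(3) .
  ultimately show ?thesis by simp
qed

lemma lascar_chain_0: "range a \<subseteq> univ C \<Longrightarrow> lascar_chain C \<kappa> a a 0"
  unfolding lascar_chain_def by (rule exI[of _ "\<lambda>_. a"]) simp

lemma lascar_chain_range: "lascar_chain C \<kappa> a b n \<Longrightarrow> range b \<subseteq> univ C"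
  unfolding lascar_chain_def by blast

lemma lascar_chain_snoc:
  assumes ab: "lascar_chain C \<kappa> a b n" and bc: "model_tp_eq C \<kappa> b c" and c: "range c \<subseteq> univ C"
  shows "lascar_chain C \<kappa> a c (Suc n)"
proof -
  obtain as Ms where chain: "as 0 = a" "as n = b" "\<forall>i\<le>n. range (as i) \<subseteq> univ C"
    "\<forall>i<n. elem_sub C (Ms i) \<and> small \<kappa> (Ms i) \<and> tp_eq C (Ms i) (as i) (as (Suc i))"
    using ab unfolding lascar_chain_def by blast
  obtain N where N: "elem_sub C N" "small \<kappa> N" "tp_eq C N b c"
    using bc unfolding model_tp_eq_def by blast
  show ?thesis
    unfolding lascar_chain_def
  proof (intro exI conjI)
    show "(as(Suc n := c)) 0 = a" "(as(Suc n := c)) (Suc n) = c" using chain(1) by simp_all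
    show "\<forall>i\<le>Suc n. range ((as(Suc n := c)) i) \<subseteq> univ C"
      using chain(3) c by (simp add: le_Suc_eq)
    show "\<forall>i<Suc n. elem_sub C ((Ms(n := N)) i) \<and> small \<kappa> ((Ms(n := N)) i) \<and>
        tp_eq C ((Ms(n := N)) i) ((as(Suc n := c)) i) ((as(Suc n := c)) (Suc i))"
      using chain(2,4) N by (auto simp: less_Suc_eq)
  qed
qed

lemma aut_foldr_comp: "\<forall>\<tau>\<in>set ts. aut C \<tau> \<Longrightarrow> aut C (foldr (\<circ>) ts id)"
  by (induction ts) (simp_all add: aut_id aut_comp)

lemma lascar_chain_foldr_comp:
  assumes ok: "struct_ok C" and \<alpha>: "range \<alpha> \<subseteq> univ C"
    and ts: "\<forall>\<tau>\<in>set ts. aut C \<tau> \<and> model_tp_eq C \<kappa> \<alpha> (\<tau> \<circ> \<alpha>)"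
  shows "lascar_chain C \<kappa> \<alpha> (foldr (\<circ>) ts id \<circ> \<alpha>) (length ts)"
  using ts
proof (induction ts rule: rev_induct)
  case Nil
  then show ?case using lascar_chain_0[OF \<alpha>] by simp
next
  case (snoc \<tau> ts)
  let ?\<rho> = "foldr (\<circ>) ts id"
  have "set (ts @ [\<tau>]) = insert \<tau> (set ts)" by simp
  then have ts: "\<forall>\<tau>\<in>set ts. aut C \<tau> \<and> model_tp_eq C \<kappa> \<alpha> (\<tau> \<circ> \<alpha>)"
    and \<tau>: "aut C \<tau>" "model_tp_eq C \<kappa> \<alpha> (\<tau> \<circ> \<alpha>)"
    using snoc.prems by blast+
  have \<rho>: "aut C ?\<rho>" using ts aut_foldr_comp by blast
  have \<tau>\<alpha>: "range (\<tau> \<circ> \<alpha>) \<subseteq> univ C" using \<alpha> aut_in[OF \<tau>(1)] by auto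
  have "model_tp_eq C \<kappa> (?\<rho> \<circ> \<alpha>) (?\<rho> \<circ> (\<tau> \<circ> \<alpha>))"
    by (rule model_tp_eq_aut_image[OF ok \<rho> \<alpha> \<tau>\<alpha> \<tau>(2)])
  moreover have "range (?\<rho> \<circ> (\<tau> \<circ> \<alpha>)) \<subseteq> univ C" using \<tau>\<alpha> aut_in[OF \<rho>] by auto
  ultimately have "lascar_chain C \<kappa> \<alpha> (?\<rho> \<circ> (\<tau> \<circ> \<alpha>)) (Suc (length ts))"
    by (rule lascar_chain_snoc[OF snoc.IH[OF ts]])
  moreover have "foldr (\<circ>) (ts @ [\<tau>]) id = ?\<rho> \<circ> \<tau>" by (induction ts) auto
  ultimately show ?case by (simp only: comp_assoc length_append_singleton)
qed

lemma model_tp_eq_imp_autfL: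
  fixes C :: "('a, 'f, 'r) struc" and \<kappa> :: "'k rel" and a b :: "'i \<Rightarrow> 'a"
  assumes mon: "monster C \<kappa>" and small_idx: "small \<kappa> (UNIV :: 'i set)"
    and a: "range a \<subseteq> univ C" and b: "range b \<subseteq> univ C" and ab: "model_tp_eq C \<kappa> a b"
  obtains \<sigma> where "\<sigma> \<in> autfL C \<kappa>" "b = \<sigma> \<circ> a"
proof -
  obtain N where N: "elem_sub C N" "small \<kappa> N" "tp_eq C N a b"
    using ab unfolding model_tp_eq_def by blast
  have "N \<subseteq> univ C" using N(1) unfolding elem_sub_def by blast
  then obtain \<sigma> where "aut C \<sigma>" "\<forall>x\<in>N. \<sigma> x = x" "\<sigma> \<circ> a = b"
    using aut_of_tp_eq[OF mon small_idx _ N(2) b a N(3)] by blast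
  then show ?thesis using autfL.fix_model[OF _ N(1,2)] that by metis
qed

lemma EL_of_lascar_chain:
  assumes mon: "monster C \<kappa>" and small_idx: "small \<kappa> (UNIV :: 'i set)"
    and chain: "lascar_chain C \<kappa> (a :: 'i \<Rightarrow> 'a) b n"
  shows "EL C \<kappa> a b"
proof -
  obtain as :: "nat \<Rightarrow> 'i \<Rightarrow> 'a" and Ms where as: "as 0 = a" "as n = b"
    "\<forall>i\<le>n. range (as i) \<subseteq> univ C"
    "\<forall>i<n. elem_sub C (Ms i) \<and> small \<kappa> (Ms i) \<and> tp_eq C (Ms i) (as i) (as (Suc i))"
    using chain unfolding lascar_chain_def by blast
  have "m \<le> n \<Longrightarrow> \<exists>\<sigma>\<in>autfL C \<kappa>. as m = \<sigma> \<circ> a" for m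
  proof (induction m)
    case 0
    show ?case by (intro bexI[of _ id]) (simp_all add: as(1) autfL.ident)
  next
    case (Suc m)
    then have m: "m < n" by simp
    obtain \<sigma> where \<sigma>: "\<sigma> \<in> autfL C \<kappa>" "as m = \<sigma> \<circ> a" using Suc.IH m by (meson less_imp_le_nat)
    have "model_tp_eq C \<kappa> (as m) (as (Suc m))"
      using as(4) m unfolding model_tp_eq_def by blast
    moreover have "range (as m) \<subseteq> univ C" "range (as (Suc m)) \<subseteq> univ C"
      using as(3) m by simp_all
    ultimately obtain \<tau> where \<tau>: "\<tau> \<in> autfL C \<kappa>" "as (Suc m) = \<tau> \<circ> as m"
      using model_tp_eq_imp_autfL[OF mon small_idx] by blast
    then show ?case using \<sigma> autfL.comp by (metis comp_assoc)
  qed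
  then show ?thesis using as(2) unfolding EL_def by blast
qed

lemma dL_le_enat_iff: "dL C \<kappa> a b \<le> enat n \<longleftrightarrow> (\<exists>m\<le>n. lascar_chain C \<kappa> a b m)"
proof
  assume "dL C \<kappa> a b \<le> enat n"
  then have "(\<exists>m. lascar_chain C \<kappa> a b m) \<and> (LEAST m. lascar_chain C \<kappa> a b m) \<le> n"
    unfolding dL_def by (auto split: if_splits)
  then show "\<exists>m\<le>n. lascar_chain C \<kappa> a b m" by (metis LeastI)
next
  assume "\<exists>m\<le>n. lascar_chain C \<kappa> a b m"
  then obtain m where "m \<le> n" "lascar_chain C \<kappa> a b m" by blast
  then show "dL C \<kappa> a b \<le> enat n"
    unfolding dL_def by (auto intro: le_trans[OF Least_le])
qed

theorem lemma5p9:
  fixes C :: "('a, 'f, 'r) struc" and \<kappa> :: "'k rel"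
    and p q :: "('f, 'r, 'i + nat, 'a) fm set" and M :: "'a set" and \<alpha> :: "'i \<Rightarrow> 'a"
  assumes "monster C \<kappa>"
    and "small \<kappa> (UNIV :: 'i set)"
    and "ctype C {} p"
    and "ctype C (univ C) q" and "p \<subseteq> q"
    and "elem_sub C M" and "small \<kappa> M"
    and "realizes C (restr q M) \<alpha>"
  shows "(\<lambda>\<sigma>. \<sigma> \<circ> \<alpha>) `
           {\<sigma>1 \<circ> \<sigma>2 \<circ> inv_into (univ C) \<sigma>3 \<circ> inv_into (univ C) \<sigma>4 | \<sigma>1 \<sigma>2 \<sigma>3 \<sigma>4.
              \<sigma>1 \<in> A_set C (restr q (range \<alpha>)) \<alpha> \<and> \<sigma>2 \<in> A_set C (restr q (range \<alpha>)) \<alpha> \<and>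
              \<sigma>3 \<in> A_set C (restr q (range \<alpha>)) \<alpha> \<and> \<sigma>4 \<in> A_set C (restr q (range \<alpha>)) \<alpha>}
         \<subseteq> {\<beta>. range \<beta> \<subseteq> univ C \<and> dL C \<kappa> \<alpha> \<beta> \<le> 4}
       \<and> {\<beta>. range \<beta> \<subseteq> univ C \<and> dL C \<kappa> \<alpha> \<beta> \<le> 4} \<subseteq> {\<beta>. EL C \<kappa> \<alpha> \<beta>}"
proof -
  let ?B = "A_set C (restr q (range \<alpha>)) \<alpha>"
  have ok: "struct_ok C" using assms(1) unfolding monster_def by blast
  have \<alpha>: "range \<alpha> \<subseteq> univ C" using assms(8) unfolding realizes_def by blast
  have B: "aut C \<sigma> \<and> model_tp_eq C \<kappa> \<alpha> (\<sigma> \<circ> \<alpha>)" if "\<sigma> \<in> ?B" for \<sigma>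
    using that model_tp_eq_of_A_set[OF assms(1,2,4,6,7,8)] unfolding A_set_def by blast
  have B_inv: "aut C (inv_into (univ C) \<sigma>) \<and> model_tp_eq C \<kappa> \<alpha> (inv_into (univ C) \<sigma> \<circ> \<alpha>)"
    if "\<sigma> \<in> ?B" for \<sigma>
    using B[OF that] aut_inv_into[OF ok] model_tp_eq_inv_into[OF ok _ \<alpha>] by blast
  have chain4: "lascar_chain C \<kappa> \<alpha> ((\<sigma>1 \<circ> \<sigma>2 \<circ> inv_into (univ C) \<sigma>3 \<circ> inv_into (univ C) \<sigma>4) \<circ> \<alpha>) 4"
    if "\<sigma>1 \<in> ?B" "\<sigma>2 \<in> ?B" "\<sigma>3 \<in> ?B" "\<sigma>4 \<in> ?B" for \<sigma>1 \<sigma>2 \<sigma>3 \<sigma>4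
    using lascar_chain_foldr_comp[OF ok \<alpha>, where \<kappa> = \<kappa>
        and ts = "[\<sigma>1, \<sigma>2, inv_into (univ C) \<sigma>3, inv_into (univ C) \<sigma>4]"]
      B[OF that(1)] B[OF that(2)] B_inv[OF that(3)] B_inv[OF that(4)]
    by (simp add: comp_assoc numeral_eq_Suc)
  show ?thesis (is "?I \<subseteq> ?D \<and> ?D \<subseteq> ?E")
  proof (intro conjI subsetI)
    fix \<beta> assume "\<beta> \<in> ?I"
    then have chain: "lascar_chain C \<kappa> \<alpha> \<beta> 4" using chain4 by blast
    then have "dL C \<kappa> \<alpha> \<beta> \<le> 4" unfolding numeral_eq_enat dL_le_enat_iff by blast
    then show "\<beta> \<in> ?D" using lascar_chain_range[OF chain] by blast
  next
    fix \<beta> assume "\<beta> \<in> ?D"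
    then obtain m where "lascar_chain C \<kappa> \<alpha> \<beta> m" unfolding numeral_eq_enat dL_le_enat_iff by blast
    then show "\<beta> \<in> ?E" using EL_of_lascar_chain[OF assms(1,2)] by blast
  qed
qed

end
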